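(* Let $\mathcal{S}$ be a compact surface without boundary, let $(\mathfrak{m},v^\bullet)$ be a pointed bipartite map of $\mathcal{S}$, and let $((\mathfrak{u},\mathfrak{l}),\varepsilon)=\Phi(\mathfrak{m},v^\bullet)$ be obtained by the construction described in the context. Then: (i) $V(\mathfrak{m})=V_\circ(\mathfrak{u})\sqcup\{v^\bullet\}$ and, for every $v\in V_\circ(\mathfrak{u})$, $\mathfrak{l}(v)=d_\mathfrak{m}(v,v^\bullet)$; (ii) the faces of $\mathfrak{m}$ correspond to the vertices of $V_\bullet(\mathfrak{u})$, and the degree of a face of $\mathfrak{m}$ is twice the degree of the corresponding vertex of $V_\bullet(\mathfrak{u})$; (iii) $\mathfrak{m}$ and $\mathfrak{u}$ have the same number of edges.
   Context: Maps are cellular embeddings of finite graphs (loops and multiple edges allowed) into $\mathcal{S}$, up to homeomorphism, rooted at a distinguished oriented corner (a corner is an angular sector between two consecutive half-edges around a vertex inside a face); the root edge is the edge of the root face that follows the root. The root flip of $\mathfrak{m}$ is the map $\bar{\mathfrak{m}}$ rerooted at the unique oriented corner incident to the other extremity of the root edge and defining the same root edge. A map is bipartite if its vertices can be 2-colored so that each edge joins different colors; the degree of a face is its number of corners; $d_\mathfrak{m}$ is the graph distance; a pointed map is a map with a distinguished vertex $v^\bullet$. Construction $\Phi$. Set $\mathfrak{l}(v)=d_\mathfrak{m}(v^\bullet,v)$ for $v\in V(\mathfrak{m})$ (neighbors differ by exactly $1$). If the root vertex has smaller label than the other extremity of the root edge, set $\varepsilon=+$; otherwise replace $\mathfrak{m}$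 by $\bar{\mathfrak{m}}$ and set $\varepsilon=-$. Unoriented level loops: take a side of an edge whose endpoints have labels $i-1$ and $i$, in a face; travel along the face boundary along this edge from the vertex labeled $i-1$ to the vertex labeled $i$; turn around this vertex (crossing zero or more edges to vertices labeled $i+1$) until meeting an edge to a vertex labeled $i-1$, and travel along it toward that vertex; keep following the boundary of the face now visited until either the loop closes or a vertex labeled $i+1$ is reached; in the latter case the previously visited vertex has label $i$, and one turns around it until meeting an edge to a vertex labeled $i-1$, and iterates. Such a loop is at level $i$. Repeat until each side of each edge of type $i-1$–$i$ (for all $i$) is visited by a loop at level $i$, and add one loop at level $0$ around $v^\bullet$. Orientation: the loops visiting the root corner are oriented according to the root, given origin at the root corner, and declared the first loops, ordered by increasing level; then one travels along the first loop from its origin, and each time new (not yet oriented) loops are encountered they are declared the next ones (by increasing level), given origin at the current location and oriented by the orientation induced by the loop being traveled; after returning to the origin one moves to the next loop, until all loops are oriented. Selection: a loop at level $i$ selects those corners with label $i$ it visits that are immediately preceded (along the oriented loop) by a corner labeled $i-1$. Add a green vertex inside each face and link, without crossings, every selected corner of the face to this green vertex by a green edge. Then $\mathfrak{u}$ is the embedded graph with vertex set $V_\circ(\mathfrak{u})=V(\mathfrak{m})\setminus\{v^\bullet\}$ together with the set $V_\bullet(\mathfrak{u})$ of green vertices and with edge set the green edges, rooted as follows: the half-edge of the root edge of $\mathfrak{m}$ not incident to the root vertex lies in a corner of $\mathfrak{u}$, which is the root corner of $\mathfrak{u}$, oriented by the orientation induced by the root of $\mathfrak{m}$; the white vertices ($V_\circ(\mathfrak{u})$)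 keep the labels $\mathfrak{l}$. Finally $\Phi(\mathfrak{m},v^\bullet)=((\mathfrak{u},\mathfrak{l}),\varepsilon)$. *)

theory Defs
  imports Main
begin

text \<open>A map on a compact surface without boundary (orientable or not) is encoded by its
finite set of flags together with three fixed-point-free involutions al0 (change vertex),
al1 (change edge) and al2 (change face), with al0 al2 a fixed-point-free involution, and
the generated group acting transitively.  A flag is the same as an oriented corner:
the flag x lies in the corner {x, al1 x} and the oriented corner x is followed by the
edge of x.\<close>

record 'f cmap =
  flg :: "'f set"
  al0 :: "'f \<Rightarrow> 'f"
  al1 :: "'f \<Rightarrow> 'f"
  al2 :: "'f \<Rightarrow> 'f"
  rt  :: "'f"

definition frel :: "'f cmap \<Rightarrow> nat set \<Rightarrow> ('f \<times> 'f) set" where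
  "frel M S = {(x, y). x \<in> flg M \<and>
      ((0 \<in> S \<and> y = al0 M x) \<or> (1 \<in> S \<and> y = al1 M x) \<or> (2 \<in> S \<and> y = al2 M x))}"

definition orb :: "'f cmap \<Rightarrow> nat set \<Rightarrow> 'f \<Rightarrow> 'f set" where
  "orb M S x = {y. (x, y) \<in> (frel M S)\<^sup>*}"

definition is_map :: "'f cmap \<Rightarrow> bool" where
  "is_map M \<longleftrightarrow> finite (flg M) \<and> rt M \<in> flg M \<and>
    (\<forall>x\<in>flg M. al0 M x \<in> flg M \<and> al1 M x \<in> flg M \<and> al2 M x \<in> flg M \<and>
       al0 M (al0 M x) = x \<and> al1 M (al1 M x) = x \<and> al2 M (al2 M x) = x \<and>
       al0 M x \<noteq> x \<and> al1 M x \<noteq> x \<and> al2 M x \<noteq> x \<and>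
       al0 M (al2 M x) = al2 M (al0 M x) \<and> al0 M (al2 M x) \<noteq> x) \<and>
    (\<forall>x\<in>flg M. \<forall>y\<in>flg M. (x, y) \<in> (frel M {0,1,2})\<^sup>*)"

definition vertex_of :: "'f cmap \<Rightarrow> 'f \<Rightarrow> 'f set" where
  "vertex_of M x = orb M {1,2} x"
definition edge_of :: "'f cmap \<Rightarrow> 'f \<Rightarrow> 'f set" where
  "edge_of M x = orb M {0,2} x"
definition face_of :: "'f cmap \<Rightarrow> 'f \<Rightarrow> 'f set" where
  "face_of M x = orb M {0,1} x"
definition corner_of :: "'f cmap \<Rightarrow> 'f \<Rightarrow> 'f set" where
  "corner_of M x = {x, al1 M x}"

definition vertices :: "'f cmap \<Rightarrow> 'f set set" where
  "vertices M = vertex_of M ` flg M"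
definition edges :: "'f cmap \<Rightarrow> 'f set set" where
  "edges M = edge_of M ` flg M"
definition faces :: "'f cmap \<Rightarrow> 'f set set" where
  "faces M = face_of M ` flg M"

definition face_degree :: "'f cmap \<Rightarrow> 'f set \<Rightarrow> nat" where
  "face_degree M F = card (corner_of M ` F)"

definition vadj :: "'f cmap \<Rightarrow> 'f set \<Rightarrow> 'f set \<Rightarrow> bool" where
  "vadj M v w \<longleftrightarrow> (\<exists>x\<in>flg M. vertex_of M x = v \<and> vertex_of M (al0 M x) = w)"

definition mdist :: "'f cmap \<Rightarrow> 'f set \<Rightarrow> 'f set \<Rightarrow> nat" where
  "mdist M v w = (LEAST n. \<exists>p. length p = Suc n \<and> hd p = v \<and> last p = w \<and>
                     (\<forall>k<n. vadj M (p ! k) (p ! Suc k)))"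

definition bipartite :: "'f cmap \<Rightarrow> bool" where
  "bipartite M \<longleftrightarrow> (\<exists>col :: 'f set \<Rightarrow> bool.
      \<forall>x\<in>flg M. col (vertex_of M x) \<noteq> col (vertex_of M (al0 M x)))"

definition lab :: "'f cmap \<Rightarrow> 'f set \<Rightarrow> 'f \<Rightarrow> nat" where
  "lab M vb x = mdist M vb (vertex_of M x)"

definition maxlab :: "'f cmap \<Rightarrow> 'f set \<Rightarrow> nat" where
  "maxlab M vb = Max (lab M vb ` flg M)"

text \<open>epsilon (True = +) and the root after the possible root flip.
 The root flip of root flag r is al0 (al2 r): the oriented corner at the other
 extremity of the root edge defining the same root edge.\<close>
definition eps :: "'f cmap \<Rightarrow> 'f set \<Rightarrow> bool" where
  "eps M vb \<longleftrightarrow> lab M vb (rt M) < lab M vb (al0 M (rt M))"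

definition root' :: "'f cmap \<Rightarrow> 'f set \<Rightarrow> 'f" where
  "root' M vb = (if eps M vb then rt M else al0 M (al2 M (rt M)))"

text \<open>An oriented level-i loop is described by the cyclic sequence of the
 flags (oriented corners) it visits: a visited flag x is a corner visited by the loop,
 the loop leaving it towards the edge of x.  One step of the loop either turns around
 the vertex of x across the edge of x (when that vertex has label i and the edge goes
 to label i+1), or travels along the edge of x following the boundary of the face.\<close>
definition lcond :: "'f cmap \<Rightarrow> 'f set \<Rightarrow> nat \<Rightarrow> 'f \<Rightarrow> bool" where
  "lcond M vb i x \<longleftrightarrow> lab M vb x = i \<and> lab M vb (al0 M x) = Suc i"

definition lstep :: "'f cmap \<Rightarrow> 'f set \<Rightarrow> nat \<Rightarrow> 'f \<Rightarrow> 'f" where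
  "lstep M vb i x = (if lcond M vb i x then al1 M (al2 M x) else al1 M (al0 M x))"

definition lorbit :: "'f cmap \<Rightarrow> 'f set \<Rightarrow> nat \<Rightarrow> 'f \<Rightarrow> 'f set" where
  "lorbit M vb i x = {(lstep M vb i ^^ n) x | n. True}"

definition lperiod :: "'f cmap \<Rightarrow> 'f set \<Rightarrow> nat \<Rightarrow> 'f \<Rightarrow> nat" where
  "lperiod M vb i x = (LEAST n. 0 < n \<and> (lstep M vb i ^^ n) x = x)"

definition lwalk :: "'f cmap \<Rightarrow> 'f set \<Rightarrow> nat \<Rightarrow> 'f \<Rightarrow> 'f list" where
  "lwalk M vb i x = map (\<lambda>k. (lstep M vb i ^^ k) x) [0..<lperiod M vb i x]"

text \<open>A flag witnessing that a loop at level i >= 1 traverses a side of an edge of type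
 (i-1)--i; at level 0, a flag at the pointed vertex (loop around vb).\<close>
definition loopflag :: "'f cmap \<Rightarrow> 'f set \<Rightarrow> nat \<Rightarrow> 'f \<Rightarrow> bool" where
  "loopflag M vb i y \<longleftrightarrow> (if i = 0 then lab M vb y = 0 else
      (lab M vb y = i - 1 \<and> lab M vb (al0 M y) = i) \<or>
      (lab M vb y = i \<and> lab M vb (al0 M y) = i - 1))"

definition is_loop_at :: "'f cmap \<Rightarrow> 'f set \<Rightarrow> nat \<Rightarrow> 'f \<Rightarrow> bool" where
  "is_loop_at M vb i x \<longleftrightarrow> x \<in> flg M \<and> lab M vb x \<le> i \<and>
      (\<exists>y\<in>lorbit M vb i x. loopflag M vb i y)"

text \<open>The unoriented loop at level i through the visited flag x is the one through h
 (reversing a loop replaces its visited flags y by al1 y).\<close>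
definition same_loop :: "'f cmap \<Rightarrow> 'f set \<Rightarrow> nat \<Rightarrow> 'f \<Rightarrow> 'f \<Rightarrow> bool" where
  "same_loop M vb i x h \<longleftrightarrow> h \<in> lorbit M vb i x \<or> al1 M h \<in> lorbit M vb i x"

text \<open>Orientation procedure.  Oriented loops with origin are pairs (level, origin flag);
 the list acc is both the list of oriented loops and the queue.\<close>
definition new_at :: "'f cmap \<Rightarrow> 'f set \<Rightarrow> (nat \<times> 'f) list \<Rightarrow> 'f \<Rightarrow> nat list" where
  "new_at M vb acc g = filter (\<lambda>j. is_loop_at M vb j g \<and>
      \<not> (\<exists>(j', h)\<in>set acc. j' = j \<and> same_loop M vb j g h)) [0..<Suc (maxlab M vb)]"

definition visit :: "'f cmap \<Rightarrow> 'f set \<Rightarrow> 'f \<Rightarrow> (nat \<times> 'f) list \<Rightarrow> (nat \<times> 'f) list" where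
  "visit M vb g acc = acc @ map (\<lambda>j. (j, g)) (new_at M vb acc g)"

definition travel :: "'f cmap \<Rightarrow> 'f set \<Rightarrow> nat \<times> 'f \<Rightarrow> (nat \<times> 'f) list \<Rightarrow> (nat \<times> 'f) list" where
  "travel M vb jg acc = fold (visit M vb) (lwalk M vb (fst jg) (snd jg)) acc"

definition ostep :: "'f cmap \<Rightarrow> 'f set \<Rightarrow> nat \<times> (nat \<times> 'f) list \<Rightarrow> nat \<times> (nat \<times> 'f) list" where
  "ostep M vb st = (if fst st < length (snd st)
      then (Suc (fst st), travel M vb (snd st ! fst st) (snd st)) else st)"

definition first_loops :: "'f cmap \<Rightarrow> 'f set \<Rightarrow> (nat \<times> 'f) list" where
  "first_loops M vb = map (\<lambda>j. (j, root' M vb))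
      (filter (\<lambda>j. is_loop_at M vb j (root' M vb)) [0..<Suc (maxlab M vb)])"

definition oriented_loops :: "'f cmap \<Rightarrow> 'f set \<Rightarrow> (nat \<times> 'f) list" where
  "oriented_loops M vb = snd ((ostep M vb ^^ (Suc (maxlab M vb) * card (flg M) + 1))
                              (0, first_loops M vb))"

text \<open>Selected corners: corners of label i visited by an oriented loop at level i and
 immediately preceded by a corner of label i-1.\<close>
definition selected :: "'f cmap \<Rightarrow> 'f set \<Rightarrow> 'f set set" where
  "selected M vb = (\<Union>(j, g)\<in>set (oriented_loops M vb).
      {corner_of M (al0 M h) | h. 1 \<le> j \<and> h \<in> lorbit M vb j g \<and>
         lab M vb h = j - 1 \<and> lab M vb (al0 M h) = j})"

text \<open>The (abstract incidence structure of the) embedded graph u: white vertices,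
 green vertices (one per face, identified with the face it lies in), green edges
 (one per selected corner), and the endpoints (white, green) of each green edge.\<close>
record 'f ugraph =
  Vw :: "'f set set"
  Vg :: "'f set set"
  Eu :: "'f set set"
  ends :: "'f set \<Rightarrow> 'f set \<times> 'f set"

definition green_degree :: "'f ugraph \<Rightarrow> 'f set \<Rightarrow> nat" where
  "green_degree U w = card {e \<in> Eu U. snd (ends U e) = w}"

definition Phi :: "'f cmap \<Rightarrow> 'f set \<Rightarrow> ('f ugraph \<times> ('f set \<Rightarrow> nat)) \<times> bool" where
  "Phi M vb =
     ((\<lparr> Vw = vertices M - {vb}, Vg = faces M, Eu = selected M vb,
         ends = (\<lambda>c. (vertex_of M (SOME x. x \<in> c), face_of M (SOME x. x \<in> c))) \<rparr>,
       (\<lambda>v. mdist M vb v)),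
      eps M vb)"

end

theory Submission
  imports Defs
begin

text \<open>Labels are distances to \<open>vb\<close>, so in a bipartite map the two ends of every edge have
  labels \<open>i\<close> and \<open>i+1\<close> for some \<open>i\<close>. A level-\<open>j\<close> loop is an orbit of the injective step map
  \<open>lstep j\<close> on the flags of label at most \<open>j\<close>; reversing a loop maps a flag \<open>x\<close> to \<open>a1 x\<close> and
  never gives back the same oriented loop. Loops of levels \<open>i\<close> and \<open>i+1\<close> meet at every edge side
  of type \<open>i\<close>--\<open>(i+1)\<close>, and all flags of label 0 lie on the loop around \<open>vb\<close>, so the orientation
  procedure reaches every unoriented loop, and it orients each one exactly once. Hence each edge
  side of type \<open>i\<close>--\<open>(i+1)\<close> is travelled upwards by exactly one oriented loop at level \<open>i+1\<close>.
  Inside a face, an oriented loop goes up as often as it goes down, because it can only enter or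
  leave the face at its own level. So exactly half of the upward edge sides of a face are
  selected: a face with \<open>2k\<close> flags has \<open>k\<close> corners and \<open>k\<close> upward edge sides, of which \<open>k/2\<close>
  are selected, and \<open>4\<close> flags per edge give as many selected corners as edges.\<close>

section \<open>Injective self-maps of finite sets\<close>

locale finite_injection =
  fixes S :: "'a set" and f :: "'a \<Rightarrow> 'a"
  assumes finite_domain: "finite S"
    and inj: "inj_on f S"
    and maps_to: "x \<in> S \<Longrightarrow> f x \<in> S"
begin

abbreviation orbit :: "'a \<Rightarrow> 'a set" where
  "orbit x \<equiv> {(f ^^ n) x | n. True}"

lemma funpow_maps_to: "x \<in> S \<Longrightarrow> (f ^^ n) x \<in> S"
  by (induction n) (auto intro: maps_to)

lemma funpow_cancel:
  assumes "x \<in> S" "y \<in> S" "(f ^^ n) x = (f ^^ n) y"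
  shows "x = y"
  using assms
proof (induction n arbitrary: x y)
  case (Suc n)
  have "(f ^^ n) (f x) = (f ^^ n) (f y)"
    using Suc.prems(3) by (simp only: funpow_Suc_right comp_apply)
  then have "f x = f y" using Suc.IH Suc.prems(1,2) maps_to by blast
  then show ?case using inj Suc.prems(1,2) by (auto dest: inj_onD)
qed simp

lemma periodic:
  assumes "x \<in> S"
  shows "\<exists>n>0. (f ^^ n) x = x"
proof -
  have "\<not> inj_on (\<lambda>k. (f ^^ k) x) {0..card S}"
  proof
    assume "inj_on (\<lambda>k. (f ^^ k) x) {0..card S}"
    then have "card {0..card S} \<le> card S"
      using card_inj_on_le finite_domain funpow_maps_to[OF assms] by blast
    then show False by simp
  qed
  then obtain a b where ab: "a < b" "(f ^^ a) x = (f ^^ b) x"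
    unfolding inj_on_def by (metis linorder_neqE_nat)
  then have "(f ^^ a) ((f ^^ (b - a)) x) = (f ^^ a) x"
    by (simp flip: comp_apply[of "f ^^ a"] funpow_add)
  then have "(f ^^ (b - a)) x = x"
    using funpow_cancel funpow_maps_to assms by blast
  then show ?thesis using ab(1) by (intro exI[of _ "b - a"]) simp
qed

lemma orbitI: "(f ^^ n) x = y \<Longrightarrow> y \<in> orbit x"
  by blast

lemma self_in_orbit: "x \<in> orbit x"
  using orbitI[of 0] by simp

lemma orbit_subset: "x \<in> S \<Longrightarrow> orbit x \<subseteq> S"
  using funpow_maps_to by blast

lemma funpow_in_orbit: "y \<in> orbit x \<Longrightarrow> (f ^^ n) y \<in> orbit x"
  by (auto simp flip: funpow_add comp_apply[of "f ^^ n"])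

lemma step_in_orbit: "y \<in> orbit x \<Longrightarrow> f y \<in> orbit x"
  using funpow_in_orbit[of y x 1] by simp

lemma funpow_period_mult: "(f ^^ p) x = x \<Longrightarrow> (f ^^ (p * n)) x = x"
  using funpow_mod_eq[where f = f and n = p and m = "p * n" and x = x] by simp

lemma funpow_undo:
  assumes "x \<in> S"
  obtains k where "(f ^^ k) ((f ^^ n) x) = x"
proof -
  obtain p where p: "p > 0" "(f ^^ p) x = x" using periodic assms by blast
  have "(f ^^ (p * n - n)) ((f ^^ n) x) = (f ^^ (p * n - n + n)) x"
    by (simp add: funpow_add)
  also have "p * n - n + n = p * n" using p(1) by (cases p) simp_all
  finally show thesis using that funpow_period_mult[OF p(2)] by simp
qed

lemma orbit_sym:
  assumes "x \<in> S" "y \<in> orbit x"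
  shows "x \<in> orbit y"
proof -
  obtain n where "y = (f ^^ n) x" using assms(2) by blast
  moreover obtain k where "(f ^^ k) ((f ^^ n) x) = x" using funpow_undo assms(1) by blast
  ultimately show ?thesis using orbitI[of k y x] by simp
qed

lemma orbit_eq:
  assumes "x \<in> S" "y \<in> orbit x"
  shows "orbit y = orbit x"
proof
  show "orbit y \<subseteq> orbit x" using funpow_in_orbit[OF assms(2)] by blast
  show "orbit x \<subseteq> orbit y" using funpow_in_orbit[OF orbit_sym[OF assms]] by blast
qed

lemma funpow_preimage_in_orbit:
  assumes "x \<in> S"
  shows "\<exists>w\<in>orbit x. (f ^^ n) w = x"
proof -
  obtain k where "(f ^^ k) ((f ^^ n) x) = x" using funpow_undo assms by blast
  then have "(f ^^ n) ((f ^^ k) x) = x" by (metis add.commute comp_apply funpow_add)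
  then show ?thesis by blast
qed

lemma image_least_period_eq_orbit:
  assumes "x \<in> S"
  shows "(\<lambda>k. (f ^^ k) x) ` {0..<(LEAST n. 0 < n \<and> (f ^^ n) x = x)} = orbit x"
proof
  let ?p = "LEAST n. 0 < n \<and> (f ^^ n) x = x"
  have p: "0 < ?p" "(f ^^ ?p) x = x" using LeastI_ex[OF periodic[OF assms]] by auto
  show "orbit x \<subseteq> (\<lambda>k. (f ^^ k) x) ` {0..<?p}"
  proof
    fix y assume "y \<in> orbit x"
    then obtain n where "y = (f ^^ (n mod ?p)) x" using funpow_mod_eq[OF p(2)] by auto
    then show "y \<in> (\<lambda>k. (f ^^ k) x) ` {0..<?p}" using p(1) by auto
  qed
qed blast

end

locale reversible_injection = finite_injection +
  fixes r :: "'a \<Rightarrow> 'a"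
  assumes r_maps_to: "x \<in> S \<Longrightarrow> r x \<in> S"
    and r_no_fixpoint: "x \<in> S \<Longrightarrow> r x \<noteq> x"
    and r_neq_step: "x \<in> S \<Longrightarrow> r x \<noteq> f x"
    and reverse_step: "x \<in> S \<Longrightarrow> f (r (f x)) = r x"
begin

lemma reverse_funpow: "x \<in> S \<Longrightarrow> (f ^^ n) (r ((f ^^ n) x)) = r x"
proof (induction n arbitrary: x)
  case (Suc n)
  have "(f ^^ Suc n) (r ((f ^^ Suc n) x)) = f ((f ^^ n) (r ((f ^^ n) (f x))))"
    by (simp add: funpow_swap1)
  also have "\<dots> = r x" using Suc maps_to reverse_step by simp
  finally show ?case .
qed simp

lemma orbit_reverse:
  assumes "x \<in> S"
  shows "orbit (r x) = r ` orbit x"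
proof
  show "orbit (r x) \<subseteq> r ` orbit x"
  proof
    fix z assume "z \<in> orbit (r x)"
    then obtain m where z: "z = (f ^^ m) (r x)" by blast
    obtain w where w: "w \<in> orbit x" "(f ^^ m) w = x"
      using funpow_preimage_in_orbit assms by blast
    moreover have "w \<in> S" using w(1) orbit_subset assms by blast
    ultimately have "z = r w" using z reverse_funpow by metis
    then show "z \<in> r ` orbit x" using w(1) by blast
  qed
  show "r ` orbit x \<subseteq> orbit (r x)"
  proof
    fix z assume "z \<in> r ` orbit x"
    then obtain k where z: "z = r ((f ^^ k) x)" by blast
    then have "z \<in> S" using r_maps_to funpow_maps_to assms by blast
    moreover have "(f ^^ k) z = r x" using z reverse_funpow[OF assms] by simp
    then have "r x \<in> orbit z" by (rule orbitI)
    ultimately show "z \<in> orbit (r x)" by (rule orbit_sym)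
  qed
qed

lemma reverse_not_in_orbit:
  assumes "x \<in> S"
  shows "r x \<notin> orbit x"
proof
  assume "r x \<in> orbit x"
  then obtain m where m: "r x = (f ^^ m) x" by blast
  have "\<exists>t. m = t + t \<or> m = Suc (t + t)" by presburger
  then obtain t where t: "m = t + t \<or> m = Suc (t + t)" by blast
  define y where "y = (f ^^ t) x"
  have y: "y \<in> S" "r y \<in> S" "f y \<in> S"
    unfolding y_def using funpow_maps_to[OF assms] r_maps_to maps_to by auto
  have ry: "(f ^^ t) (r y) = r x" unfolding y_def by (rule reverse_funpow[OF assms])
  show False using t
  proof
    assume "m = t + t"
    then have "(f ^^ t) (r y) = (f ^^ t) y" using m ry by (simp only: y_def funpow_add comp_apply)
    then have "r y = y" by (rule funpow_cancel[OF y(2,1)])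
    then show False using r_no_fixpoint y(1) by blast
  next
    assume "m = Suc (t + t)"
    then have "(f ^^ m) x = f ((f ^^ t) y)" by (simp add: y_def funpow_add)
    also have "\<dots> = (f ^^ t) (f y)" by (rule funpow_swap1)
    finally have "(f ^^ t) (r y) = (f ^^ t) (f y)" using m ry by simp
    then have "r y = f y" by (rule funpow_cancel[OF y(2,3)])
    then show False using r_neq_step y(1) by blast
  qed
qed

end

text \<open>Both sides are obtained from \<open>card {x\<in>T. P (s x)}\<close> and \<open>card {x\<in>T. P x}\<close> by
  removing the same number; these two agree because \<open>s\<close> is a bijection from \<open>T\<close> onto \<open>s ` T\<close>,
  and the equinumerous sets \<open>s ` T - T\<close> and \<open>T - s ` T\<close> consist of elements satisfying \<open>P\<close>.\<close>
lemma card_entries_eq_card_exits: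
  fixes s :: "'a \<Rightarrow> 'a"
  assumes fin: "finite T" and inj: "inj_on s T"
    and leave: "\<And>x. x \<in> T \<Longrightarrow> s x \<notin> T \<Longrightarrow> P (s x)"
    and enter: "\<And>y. y \<in> T \<Longrightarrow> y \<notin> s ` T \<Longrightarrow> P y"
  shows "card {x\<in>T. \<not> P x \<and> P (s x)} = card {x\<in>T. P x \<and> \<not> P (s x)}"
proof -
  have "card (s ` T - T) = card (T - s ` T)"
    using card_Int_Diff[of "s ` T" T] card_Int_Diff[of T "s ` T"] card_image[OF inj] fin
    by (simp add: Int_commute)
  have "card {x\<in>T. P (s x)} = card {y\<in>s ` T. P y}"
  proof -
    have "{y\<in>s ` T. P y} = s ` {x\<in>T. P (s x)}" by auto
    then show ?thesis using card_image[OF inj_on_subset[OF inj]] by simp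
  qed
  also have "\<dots> = card {y\<in>T \<inter> s ` T. P y} + card (s ` T - T)"
  proof -
    have "{y\<in>s ` T. P y} = {y\<in>T \<inter> s ` T. P y} \<union> (s ` T - T)" using leave by auto
    moreover have "card ({y\<in>T \<inter> s ` T. P y} \<union> (s ` T - T)) =
        card {y\<in>T \<inter> s ` T. P y} + card (s ` T - T)"
      by (rule card_Un_disjoint) (use fin in auto)
    ultimately show ?thesis by simp
  qed
  also have "\<dots> = card {y\<in>T. P y}"
  proof -
    have "{y\<in>T. P y} = {y\<in>T \<inter> s ` T. P y} \<union> (T - s ` T)" using enter by auto
    moreover have "card ({y\<in>T \<inter> s ` T. P y} \<union> (T - s ` T)) =
        card {y\<in>T \<inter> s ` T. P y} + card (T - s ` T)"
      by (rule card_Un_disjoint) (use fin in auto)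
    ultimately show ?thesis using \<open>card (s ` T - T) = card (T - s ` T)\<close> by simp
  qed
  finally have "card {x\<in>T. P (s x)} = card {x\<in>T. P x}" .
  have split: "card {x\<in>T. Q x} = card {x\<in>T. Q x \<and> R x} + card {x\<in>T. Q x \<and> \<not> R x}"
    for Q R :: "'a \<Rightarrow> bool"
  proof -
    have "{x\<in>T. Q x} = {x\<in>T. Q x \<and> R x} \<union> {x\<in>T. Q x \<and> \<not> R x}" by auto
    then show ?thesis using fin by (simp add: card_Un_disjoint disjoint_iff)
  qed
  show ?thesis
    using \<open>card {x\<in>T. P (s x)} = card {x\<in>T. P x}\<close>
      split[where Q = "\<lambda>x. P (s x)" and R = P] split[where Q = P and R = "\<lambda>x. P (s x)"]
    by (simp only: conj_commute)
qed

lemma card_eq_twice_card_involution_pairs: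
  assumes fin: "finite F" and maps_to: "\<And>x. x \<in> F \<Longrightarrow> g x \<in> F"
    and involution: "\<And>x. x \<in> F \<Longrightarrow> g (g x) = x" and no_fixpoint: "\<And>x. x \<in> F \<Longrightarrow> g x \<noteq> x"
  shows "card F = 2 * card ((\<lambda>x. {x, g x}) ` F)"
proof -
  have "2 * card ((\<lambda>x. {x, g x}) ` F) = card (\<Union> ((\<lambda>x. {x, g x}) ` F))"
  proof (rule card_partition)
    show "\<And>c. c \<in> (\<lambda>x. {x, g x}) ` F \<Longrightarrow> card c = 2" using no_fixpoint by (auto simp: eq_commute)
    show "c1 \<inter> c2 = {}" if "c1 \<in> (\<lambda>x. {x, g x}) ` F" "c2 \<in> (\<lambda>x. {x, g x}) ` F" "c1 \<noteq> c2"
      for c1 c2 using that involution by auto metis+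
  qed (use fin maps_to in auto)
  also have "\<Union> ((\<lambda>x. {x, g x}) ` F) = F" using maps_to by auto
  finally show ?thesis by simp
qed

lemma card_eq_twice_card_half:
  assumes fin: "finite F" and maps_to: "\<And>x. x \<in> F \<Longrightarrow> g x \<in> F"
    and involution: "\<And>x. x \<in> F \<Longrightarrow> g (g x) = x" and swap: "\<And>x. x \<in> F \<Longrightarrow> Q (g x) \<longleftrightarrow> \<not> Q x"
  shows "card F = 2 * card {x\<in>F. Q x}"
proof -
  have "F = {x\<in>F. Q x} \<union> g ` {x\<in>F. Q x}"
    using maps_to involution swap by auto (metis image_eqI mem_Collect_eq)
  moreover have "{x\<in>F. Q x} \<inter> g ` {x\<in>F. Q x} = {}" using swap by auto
  moreover have "inj_on g {x\<in>F. Q x}" using involution by (metis (mono_tags, lifting) inj_onI mem_Collect_eq)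
  ultimately show ?thesis using fin card_Un_disjoint[of "{x\<in>F. Q x}" "g ` {x\<in>F. Q x}"]
    by (simp add: card_image)
qed

lemma distinct_if_sorted_wrt_irrefl:
  "sorted_wrt R xs \<Longrightarrow> (\<And>x. x \<in> set xs \<Longrightarrow> \<not> R x x) \<Longrightarrow> distinct xs"
  by (induction xs) auto

lemma sorted_wrt_related:
  "sorted_wrt R xs \<Longrightarrow> x \<in> set xs \<Longrightarrow> y \<in> set xs \<Longrightarrow> x \<noteq> y \<Longrightarrow> R x y \<or> R y x"
  by (induction xs) auto

section \<open>Flag maps\<close>

locale flag_map =
  fixes M :: "'f cmap"
  assumes is_map: "is_map M"
begin

abbreviation flags :: "'f set" where "flags \<equiv> flg M"
abbreviation a0 :: "'f \<Rightarrow> 'f" where "a0 \<equiv> al0 M"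
abbreviation a1 :: "'f \<Rightarrow> 'f" where "a1 \<equiv> al1 M"
abbreviation a2 :: "'f \<Rightarrow> 'f" where "a2 \<equiv> al2 M"

lemma finite_flags: "finite flags"
  and root_flag: "rt M \<in> flags"
  and flag_connected: "x \<in> flags \<Longrightarrow> y \<in> flags \<Longrightarrow> (x, y) \<in> (frel M {0,1,2})\<^sup>*"
  using is_map unfolding is_map_def by blast+

lemma flags_closed [simp]:
  assumes "x \<in> flags" shows "a0 x \<in> flags" "a1 x \<in> flags" "a2 x \<in> flags"
  using is_map assms unfolding is_map_def by blast+

lemma involutions [simp]:
  assumes "x \<in> flags" shows "a0 (a0 x) = x" "a1 (a1 x) = x" "a2 (a2 x) = x"
  using is_map assms unfolding is_map_def by blast+

lemma fixpoint_free:
  assumes "x \<in> flags" shows "a0 x \<noteq> x" "a1 x \<noteq> x" "a2 x \<noteq> x" "a0 (a2 x) \<noteq> x"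
  using is_map assms unfolding is_map_def by blast+

lemma a0_a2_commute: "x \<in> flags \<Longrightarrow> a0 (a2 x) = a2 (a0 x)"
  using is_map unfolding is_map_def by blast

lemma inj_on_flags [simp]:
  assumes "x \<in> flags" "y \<in> flags"
  shows "a0 x = a0 y \<longleftrightarrow> x = y" "a1 x = a1 y \<longleftrightarrow> x = y" "a2 x = a2 y \<longleftrightarrow> x = y"
  using involutions assms by metis+

lemma sym_frel: "sym (frel M S)"
  by (rule symI) (auto simp: frel_def)

lemma mem_orb_iff: "y \<in> orb M S x \<longleftrightarrow> orb M S y = orb M S x"
proof
  assume "y \<in> orb M S x"
  then have xy: "(x, y) \<in> (frel M S)\<^sup>*" and yx: "(y, x) \<in> (frel M S)\<^sup>*"
    using sym_rtrancl[OF sym_frel] by (auto simp: orb_def dest: symD)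
  show "orb M S y = orb M S x"
    unfolding orb_def using rtrancl_trans[OF xy] rtrancl_trans[OF yx] by blast
qed (auto simp: orb_def)

lemma self_in_orb: "x \<in> orb M S x"
  by (simp add: orb_def)

lemma orb_step: "y \<in> orb M S x \<Longrightarrow> (y, z) \<in> frel M S \<Longrightarrow> z \<in> orb M S x"
  unfolding orb_def by (blast intro: rtrancl_into_rtrancl)

lemma orb_subset_flags: "x \<in> flags \<Longrightarrow> orb M S x \<subseteq> flags"
proof
  fix y assume x: "x \<in> flags" and "y \<in> orb M S x"
  then have "(x, y) \<in> (frel M S)\<^sup>*" by (simp add: orb_def)
  then show "y \<in> flags" by (induction rule: rtrancl_induct) (use x in \<open>auto simp: frel_def\<close>)
qed

lemma orb_frel_eq: "(x, y) \<in> frel M S \<Longrightarrow> orb M S y = orb M S x"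
  using orb_step[OF self_in_orb] by (simp only: mem_orb_iff)

lemma Union_orbs: "\<Union> (orb M S ` flags) = flags"
proof
  show "\<Union> (orb M S ` flags) \<subseteq> flags" using orb_subset_flags by blast
  show "flags \<subseteq> \<Union> (orb M S ` flags)" using self_in_orb by blast
qed

lemma orbs_disjoint:
  assumes "X \<in> orb M S ` flags" "Y \<in> orb M S ` flags" "X \<noteq> Y"
  shows "X \<inter> Y = {}"
proof -
  obtain x y where "X = orb M S x" "Y = orb M S y" using assms(1,2) by blast
  then have "orb M S z = X" "orb M S z = Y" if "z \<in> X" "z \<in> Y" for z
    using that mem_orb_iff by simp_all
  then show ?thesis using assms(3) by blast
qed

lemma vertex_of_a1 [simp]: "x \<in> flags \<Longrightarrow> vertex_of M (a1 x) = vertex_of M x"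
  and vertex_of_a2 [simp]: "x \<in> flags \<Longrightarrow> vertex_of M (a2 x) = vertex_of M x"
  and face_of_a0 [simp]: "x \<in> flags \<Longrightarrow> face_of M (a0 x) = face_of M x"
  and face_of_a1 [simp]: "x \<in> flags \<Longrightarrow> face_of M (a1 x) = face_of M x"
  unfolding vertex_of_def face_of_def by (rule orb_frel_eq, simp add: frel_def)+

lemma face_closed:
  assumes "F \<in> faces M" "y \<in> flags"
  shows "a0 y \<in> F \<longleftrightarrow> y \<in> F" "a1 y \<in> F \<longleftrightarrow> y \<in> F"
proof -
  obtain x where "F = face_of M x" using assms(1) unfolding faces_def by blast
  then show "a0 y \<in> F \<longleftrightarrow> y \<in> F" "a1 y \<in> F \<longleftrightarrow> y \<in> F"
    using assms(2) face_of_a0 face_of_a1 unfolding face_of_def by (simp_all add: mem_orb_iff)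
qed

lemma face_subset_flags: "F \<in> faces M \<Longrightarrow> F \<subseteq> flags"
  unfolding faces_def face_of_def using orb_subset_flags by blast

lemma card_edge_of:
  assumes x: "x \<in> flags"
  shows "card (edge_of M x) = 4"
proof -
  have "edge_of M x = {x, a0 x, a2 x, a0 (a2 x)}"
  proof
    have "(x, a0 x) \<in> frel M {0, 2}" "(x, a2 x) \<in> frel M {0, 2}"
      "(a2 x, a0 (a2 x)) \<in> frel M {0, 2}"
      using x by (simp_all add: frel_def)
    then have "a0 x \<in> edge_of M x" "a2 x \<in> edge_of M x" "a0 (a2 x) \<in> edge_of M x"
      unfolding edge_of_def using orb_step self_in_orb by metis+
    moreover have "x \<in> edge_of M x" unfolding edge_of_def by (rule self_in_orb)
    ultimately show "{x, a0 x, a2 x, a0 (a2 x)} \<subseteq> edge_of M x" by blast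
    show "edge_of M x \<subseteq> {x, a0 x, a2 x, a0 (a2 x)}"
    proof
      fix y assume "y \<in> edge_of M x"
      then have "(x, y) \<in> (frel M {0, 2})\<^sup>*" by (simp add: edge_of_def orb_def)
      then show "y \<in> {x, a0 x, a2 x, a0 (a2 x)}"
        by (induction rule: rtrancl_induct) (auto simp: frel_def x a0_a2_commute)
    qed
  qed
  moreover have "a0 x \<noteq> a2 x"
    using fixpoint_free(4)[OF x] involutions(1)[OF x] by metis
  ultimately show ?thesis
    using x fixpoint_free[of x] fixpoint_free[of "a2 x"] by auto
qed

lemma card_flags_eq_4_card_edges: "card flags = 4 * card (edges M)"
proof -
  have "4 * card (edges M) = card (\<Union> (edges M))"
    by (rule card_partition)
      (use finite_flags card_edge_of orbs_disjoint Union_orbs in \<open>auto simp: edges_def edge_of_def\<close>)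
  then show ?thesis using Union_orbs unfolding edges_def edge_of_def by simp
qed

lemma card_face_eq_twice_degree:
  assumes F: "F \<in> faces M"
  shows "card F = 2 * face_degree M F"
proof -
  have "F \<subseteq> flags" by (rule face_subset_flags[OF F])
  then show ?thesis
    unfolding face_degree_def corner_of_def
    using card_eq_twice_card_involution_pairs[of F a1] finite_subset[OF _ finite_flags]
      face_closed(2)[OF F] fixpoint_free(2) by (simp add: subset_iff)
qed

end

abbreviation (in flag_map) rot :: "'f \<Rightarrow> 'f" where "rot \<equiv> \<lambda>x. a1 (a2 x)"

sublocale flag_map \<subseteq> rotation: finite_injection flags rot
  by unfold_locales (auto simp: finite_flags inj_on_def)

context flag_map
begin

lemma rot_funpow_flag [simp]: "x \<in> flags \<Longrightarrow> (rot ^^ n) x \<in> flags"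
  by (rule rotation.funpow_maps_to)

lemma a1_rot_funpow:
  assumes h: "h \<in> flags"
  shows "\<exists>m. a1 ((rot ^^ n) h) = a2 ((rot ^^ m) h)"
proof (cases n)
  case 0
  obtain p where "(rot ^^ p) ((rot ^^ 1) h) = h" using rotation.funpow_undo[OF h] by blast
  then have "a1 (a2 ((rot ^^ p) h)) = h" using funpow_swap1[of rot p h] by simp
  then have "a1 h = a1 (a1 (a2 ((rot ^^ p) h)))" by simp
  also have "\<dots> = a2 ((rot ^^ p) h)" using h by simp
  finally show ?thesis using 0 by auto
next
  case (Suc m)
  then show ?thesis using h by auto
qed

lemma vertex_of_subset_rotations:
  assumes h: "h \<in> flags" and "w \<in> vertex_of M h"
  shows "\<exists>n. w = (rot ^^ n) h \<or> w = a2 ((rot ^^ n) h)"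
proof -
  have "(h, w) \<in> (frel M {1, 2})\<^sup>*" using assms(2) unfolding vertex_of_def orb_def by simp
  then show ?thesis
  proof (induction rule: rtrancl_induct)
    case base
    then show ?case by (metis funpow_0)
  next
    case (step w w')
    then obtain n where n: "w = (rot ^^ n) h \<or> w = a2 ((rot ^^ n) h)" by blast
    have w': "w' = a1 w \<or> w' = a2 w" using step(2) by (auto simp: frel_def)
    show ?case using n
    proof
      assume w: "w = (rot ^^ n) h"
      then show ?thesis using w' a1_rot_funpow[OF h, of n] by blast
    next
      assume w: "w = a2 ((rot ^^ n) h)"
      then have "a1 w = (rot ^^ Suc n) h" "a2 w = (rot ^^ n) h" using h by simp_all
      then show ?thesis using w' by blast
    qed
  qed
qed

end

definition has_walk :: "'f cmap \<Rightarrow> 'f set \<Rightarrow> 'f set \<Rightarrow> nat \<Rightarrow> bool" where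
  "has_walk M v w n \<longleftrightarrow> (\<exists>p. length p = Suc n \<and> hd p = v \<and> last p = w \<and>
                     (\<forall>k<n. vadj M (p ! k) (p ! Suc k)))"

lemma mdist_eq_Least_walk: "mdist M v w = (LEAST n. has_walk M v w n)"
  unfolding mdist_def has_walk_def ..

lemma has_walk_0_iff: "has_walk M v w 0 \<longleftrightarrow> v = w"
  unfolding has_walk_def by (auto simp: length_Suc_conv intro: exI[of _ "[v]"])

lemma has_walk_Suc_iff: "has_walk M v w (Suc n) \<longleftrightarrow> (\<exists>u. has_walk M v u n \<and> vadj M u w)"
proof
  assume "has_walk M v w (Suc n)"
  then obtain p where p: "length p = Suc (Suc n)" "hd p = v" "last p = w"
    "\<forall>k<Suc n. vadj M (p ! k) (p ! Suc k)"
    unfolding has_walk_def by blast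
  then have "p \<noteq> []" "butlast p \<noteq> []" by (auto simp: length_Suc_conv)
  then have "has_walk M v (p ! n) n"
    unfolding has_walk_def using p
    by (intro exI[of _ "butlast p"]) (auto simp: nth_butlast hd_conv_nth last_conv_nth)
  moreover have "vadj M (p ! n) w" using p(1,3,4) \<open>p \<noteq> []\<close> by (auto simp: last_conv_nth)
  ultimately show "\<exists>u. has_walk M v u n \<and> vadj M u w" by blast
next
  assume "\<exists>u. has_walk M v u n \<and> vadj M u w"
  then obtain u p where p: "length p = Suc n" "hd p = v" "last p = u"
    "\<forall>k<n. vadj M (p ! k) (p ! Suc k)" and "vadj M u w"
    unfolding has_walk_def by blast
  then have "p \<noteq> []" by auto
  then have "p ! n = u" using last_conv_nth[of p] p(1,3) by simp
  then show "has_walk M v w (Suc n)"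
    unfolding has_walk_def using p \<open>vadj M u w\<close> \<open>p \<noteq> []\<close>
    by (intro exI[of _ "p @ [w]"]) (auto simp: nth_append less_Suc_eq)
qed

lemma bipartite_walk_parity:
  fixes col :: "'f set \<Rightarrow> bool"
  assumes "has_walk M v w n" and col: "\<forall>x\<in>flg M. col (vertex_of M x) \<noteq> col (vertex_of M (al0 M x))"
  shows "col v = col w \<longleftrightarrow> even n"
  using assms(1)
proof (induction n arbitrary: w)
  case (Suc n)
  then obtain u where "has_walk M v u n" "vadj M u w" using has_walk_Suc_iff by blast
  then have "col v = col u \<longleftrightarrow> even n" "col u \<noteq> col w"
    using Suc.IH col unfolding vadj_def by auto
  then show ?case by (cases "col v"; cases "col u"; cases "col w") auto
qed (simp add: has_walk_0_iff)

context flag_map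
begin

lemma vadj_sym: "vadj M v w \<Longrightarrow> vadj M w v"
  unfolding vadj_def by (metis flags_closed(1) involutions(1))

lemma has_walk_Cons: "vadj M v u \<Longrightarrow> has_walk M u w n \<Longrightarrow> has_walk M v w (Suc n)"
proof (induction n arbitrary: w)
  case 0
  then show ?case by (auto simp: has_walk_Suc_iff has_walk_0_iff)
next
  case (Suc n)
  then show ?case by (meson has_walk_Suc_iff)
qed

lemma has_walk_sym: "has_walk M v w n \<Longrightarrow> has_walk M w v n"
proof (induction n arbitrary: w)
  case (Suc n)
  then show ?case by (meson has_walk_Cons has_walk_Suc_iff vadj_sym)
qed (simp add: has_walk_0_iff)

lemma mdist_sym: "mdist M v w = mdist M w v"
proof -
  have "has_walk M v w = has_walk M w v" using has_walk_sym by blast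
  then show ?thesis by (simp add: mdist_eq_Least_walk)
qed

lemma has_walk_between_flags:
  assumes "x \<in> flags" "y \<in> flags"
  shows "\<exists>n. has_walk M (vertex_of M x) (vertex_of M y) n"
  using flag_connected[OF assms]
proof (induction rule: rtrancl_induct)
  case base
  then show ?case using has_walk_0_iff by blast
next
  case (step y z)
  then obtain n where n: "has_walk M (vertex_of M x) (vertex_of M y) n" by blast
  have "y \<in> flags" and "z = a0 y \<or> z = a1 y \<or> z = a2 y" using step(2) by (auto simp: frel_def)
  then show ?case
  proof (elim disjE)
    assume "z = a0 y"
    then have "vadj M (vertex_of M y) (vertex_of M z)" unfolding vadj_def using \<open>y \<in> flags\<close> by blast
    then show ?thesis using n has_walk_Suc_iff by blast
  qed (use n in auto)
qed

end

section \<open>Labels of a pointed bipartite map\<close>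

locale pointed_bipartite_map = flag_map M for M :: "'f cmap" +
  fixes vb :: "'f set"
  assumes bipartite: "bipartite M" and pointed: "vb \<in> vertices M"
begin

abbreviation lb :: "'f \<Rightarrow> nat" where "lb \<equiv> lab M vb"

lemma walk_of_label_length: "x \<in> flags \<Longrightarrow> has_walk M vb (vertex_of M x) (lb x)"
proof -
  assume "x \<in> flags"
  moreover obtain x0 where "x0 \<in> flags" "vertex_of M x0 = vb" using pointed unfolding vertices_def by blast
  ultimately have "\<exists>n. has_walk M vb (vertex_of M x) n" using has_walk_between_flags by blast
  then show ?thesis unfolding lab_def mdist_eq_Least_walk by (rule LeastI_ex)
qed

lemma label_le_walk_length: "has_walk M vb (vertex_of M x) n \<Longrightarrow> lb x \<le> n"
  unfolding lab_def mdist_eq_Least_walk by (rule Least_le)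

lemma label_eq_0_iff:
  assumes "x \<in> flags"
  shows "lb x = 0 \<longleftrightarrow> vertex_of M x = vb"
proof
  assume "lb x = 0"
  then show "vertex_of M x = vb" using walk_of_label_length[OF assms] by (simp add: has_walk_0_iff)
next
  assume "vertex_of M x = vb"
  then show "lb x = 0" using label_le_walk_length[of x 0] by (simp add: has_walk_0_iff)
qed

lemma label_a1 [simp]: "x \<in> flags \<Longrightarrow> lb (a1 x) = lb x"
  and label_a2 [simp]: "x \<in> flags \<Longrightarrow> lb (a2 x) = lb x"
  by (simp_all add: lab_def)

lemma label_a0_a2 [simp]: "x \<in> flags \<Longrightarrow> lb (a0 (a2 x)) = lb (a0 x)"
  by (simp add: a0_a2_commute)

text \<open>Neighbouring labels differ by at most one because \<open>lb\<close> is a graph distance, and they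
  cannot be equal because of the parity of walks in a bipartite graph.\<close>
lemma label_a0:
  assumes x: "x \<in> flags"
  shows "lb (a0 x) = Suc (lb x) \<or> lb x = Suc (lb (a0 x))"
proof -
  have x0: "a0 x \<in> flags" using x by simp
  have adj: "vadj M (vertex_of M x) (vertex_of M (a0 x))" unfolding vadj_def using x by blast
  have "has_walk M vb (vertex_of M (a0 x)) (Suc (lb x))"
    using walk_of_label_length[OF x] adj unfolding has_walk_Suc_iff by blast
  then have le1: "lb (a0 x) \<le> Suc (lb x)" by (rule label_le_walk_length)
  have "has_walk M vb (vertex_of M x) (Suc (lb (a0 x)))"
    using walk_of_label_length[OF x0] vadj_sym[OF adj] unfolding has_walk_Suc_iff by blast
  then have le2: "lb x \<le> Suc (lb (a0 x))" by (rule label_le_walk_length)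
  obtain col :: "'f set \<Rightarrow> bool"
    where col: "\<forall>x\<in>flags. col (vertex_of M x) \<noteq> col (vertex_of M (a0 x))"
    using bipartite unfolding bipartite_def by blast
  have "col vb = col (vertex_of M x) \<longleftrightarrow> even (lb x)"
    by (rule bipartite_walk_parity[OF walk_of_label_length[OF x] col])
  moreover have "col vb = col (vertex_of M (a0 x)) \<longleftrightarrow> even (lb (a0 x))"
    by (rule bipartite_walk_parity[OF walk_of_label_length[OF x0] col])
  moreover have "col (vertex_of M x) \<noteq> col (vertex_of M (a0 x))" using col x by blast
  ultimately have "lb x \<noteq> lb (a0 x)" by auto
  then show ?thesis using le1 le2 by linarith
qed

lemma label_descent:
  assumes "x \<in> flags" "lb x = Suc n"
  shows "\<exists>w\<in>vertex_of M x. w \<in> flags \<and> lb (a0 w) = n"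
proof -
  have "has_walk M vb (vertex_of M x) (Suc n)" using walk_of_label_length[OF assms(1)] assms(2) by simp
  then obtain u where u: "has_walk M vb u n" "vadj M u (vertex_of M x)"
    unfolding has_walk_Suc_iff by blast
  then obtain z where z: "z \<in> flags" "vertex_of M z = u" "vertex_of M (a0 z) = vertex_of M x"
    unfolding vadj_def by blast
  have "a0 z \<in> vertex_of M x" using z(3) unfolding vertex_of_def by (simp add: mem_orb_iff)
  moreover have "lb z \<le> n" using u(1) z(2) by (auto intro: label_le_walk_length)
  moreover have "lb (a0 z) = Suc n" using assms(2) z(3) by (simp add: lab_def)
  ultimately show ?thesis using label_a0[OF z(1)] z(1) by (intro bexI[of _ "a0 z"]) auto
qed

lemma label_le_maxlab: "x \<in> flags \<Longrightarrow> lb x \<le> maxlab M vb"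
  unfolding maxlab_def using finite_flags by simp

end

section \<open>Level loops\<close>

context pointed_bipartite_map
begin

definition sublevel :: "nat \<Rightarrow> 'f set" where
  "sublevel j = {x\<in>flags. lb x \<le> j}"

lemma lstep_eq:
  "lstep M vb j x = (if lb x = j \<and> lb (a0 x) = Suc j then a1 (a2 x) else a1 (a0 x))"
  unfolding lstep_def lcond_def ..

lemma a0_in_sublevel:
  assumes "x \<in> sublevel j" "\<not> (lb x = j \<and> lb (a0 x) = Suc j)"
  shows "a0 x \<in> sublevel j"
  using assms label_a0[of x] unfolding sublevel_def by auto

lemma level_loop_reversible: "reversible_injection (sublevel j) (lstep M vb j) a1"
proof
  show "finite (sublevel j)" unfolding sublevel_def using finite_flags by simp
  show "x \<in> sublevel j \<Longrightarrow> lstep M vb j x \<in> sublevel j" for x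
    using a0_in_sublevel[of x j] unfolding lstep_eq by (auto simp: sublevel_def)
  show "a1 x \<in> sublevel j" "a1 x \<noteq> x" if "x \<in> sublevel j" for x
    using that fixpoint_free(2) by (auto simp: sublevel_def)
  show "a1 x \<noteq> lstep M vb j x" if "x \<in> sublevel j" for x
    using that fixpoint_free(1,3)[of x] by (auto simp: sublevel_def lstep_eq)
  show "lstep M vb j (a1 (lstep M vb j x)) = a1 x" if "x \<in> sublevel j" for x
    using that a0_in_sublevel[of x j] by (auto simp: sublevel_def lstep_eq)
  show "inj_on (lstep M vb j) (sublevel j)"
  proof (rule inj_onI)
    fix x y assume x: "x \<in> sublevel j" and y: "y \<in> sublevel j"
      and eq: "lstep M vb j x = lstep M vb j y"
    have crossing: "a2 u \<noteq> a0 v" if "u \<in> sublevel j" "v \<in> sublevel j" "lb (a0 u) = Suc j" for u v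
    proof
      assume "a2 u = a0 v"
      then have "v = a0 (a2 u)" using that(2) by (auto simp: sublevel_def)
      then show False using that by (auto simp: sublevel_def)
    qed
    show "x = y"
      using eq crossing[OF x y] crossing[OF y x] x y by (auto simp: sublevel_def lstep_eq split: if_splits)
  qed
qed

end

sublocale pointed_bipartite_map \<subseteq> level: reversible_injection "sublevel j" "lstep M vb j" "a1" for j
  by (rule level_loop_reversible)

context pointed_bipartite_map
begin

lemma lorbit_subset_sublevel: "x \<in> sublevel j \<Longrightarrow> lorbit M vb j x \<subseteq> sublevel j"
  unfolding lorbit_def by (rule level.orbit_subset)

lemma self_in_lorbit: "x \<in> lorbit M vb j x"
  unfolding lorbit_def by (rule level.self_in_orbit)

lemma lstep_in_lorbit: "y \<in> lorbit M vb j x \<Longrightarrow> lstep M vb j y \<in> lorbit M vb j x"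
  unfolding lorbit_def by (rule level.step_in_orbit)

lemma lorbit_eq: "x \<in> sublevel j \<Longrightarrow> y \<in> lorbit M vb j x \<Longrightarrow> lorbit M vb j y = lorbit M vb j x"
  unfolding lorbit_def by (rule level.orbit_eq)

lemma lorbit_a1: "x \<in> sublevel j \<Longrightarrow> lorbit M vb j (a1 x) = a1 ` lorbit M vb j x"
  unfolding lorbit_def by (rule level.orbit_reverse)

lemma a1_notin_lorbit: "x \<in> sublevel j \<Longrightarrow> a1 x \<notin> lorbit M vb j x"
  unfolding lorbit_def by (rule level.reverse_not_in_orbit)

lemma lstep_preimage_in_lorbit:
  assumes "x \<in> sublevel j" "y \<in> lorbit M vb j x"
  shows "\<exists>z\<in>lorbit M vb j x. lstep M vb j z = y"
proof -
  have "y \<in> sublevel j" using assms lorbit_subset_sublevel by blast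
  then obtain z where "z \<in> lorbit M vb j y" "lstep M vb j z = y"
    using level.funpow_preimage_in_orbit[of y j 1] unfolding lorbit_def by auto
  then show ?thesis using lorbit_eq[OF assms] by blast
qed

lemma a0_in_reversed_lorbit:
  assumes "x \<in> sublevel j" "lstep M vb j x = a1 (a0 x)"
  shows "a0 x \<in> lorbit M vb j (a1 x)"
proof -
  have "a1 (lstep M vb j x) \<in> lorbit M vb j (a1 x)"
    using lorbit_a1[OF assms(1)] lstep_in_lorbit[OF self_in_lorbit] by blast
  then show ?thesis using assms by (simp add: sublevel_def)
qed

lemma set_lwalk: "x \<in> sublevel j \<Longrightarrow> set (lwalk M vb j x) = lorbit M vb j x"
  unfolding lwalk_def lperiod_def lorbit_def
  using level.image_least_period_eq_orbit by simp

end

section \<open>The orientation procedure\<close>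

context pointed_bipartite_map
begin

abbreviation ml :: nat where "ml \<equiv> maxlab M vb"

lemma is_loop_at_sublevel: "is_loop_at M vb j g \<Longrightarrow> g \<in> sublevel j"
  unfolding is_loop_at_def sublevel_def by simp

lemma is_loop_at_le_maxlab:
  assumes "is_loop_at M vb i y"
  shows "i \<le> ml"
proof -
  obtain z where z: "z \<in> lorbit M vb i y" "loopflag M vb i z"
    using assms unfolding is_loop_at_def by blast
  then have "z \<in> flags"
    using lorbit_subset_sublevel[OF is_loop_at_sublevel[OF assms]] by (auto simp: sublevel_def)
  then show ?thesis
    using z(2) label_le_maxlab[of z] label_le_maxlab[of "a0 z"] unfolding loopflag_def
    by (cases "i = 0") auto
qed

lemma is_loop_at_a1:
  assumes "is_loop_at M vb i y"
  shows "is_loop_at M vb i (a1 y)"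
proof -
  have y: "y \<in> sublevel i" using is_loop_at_sublevel assms by blast
  obtain z where z: "z \<in> lorbit M vb i y" "loopflag M vb i z"
    using assms unfolding is_loop_at_def by blast
  have "z \<in> flags" using z(1) lorbit_subset_sublevel[OF y] by (auto simp: sublevel_def)
  have "\<exists>z'\<in>lorbit M vb i (a1 y). loopflag M vb i z'"
  proof (cases "i = 0")
    case True
    have "a1 z \<in> lorbit M vb i (a1 y)" using z(1) lorbit_a1[OF y] by blast
    moreover have "loopflag M vb i (a1 z)" using True z(2) \<open>z \<in> flags\<close> by (simp add: loopflag_def)
    ultimately show ?thesis by blast
  next
    case False
    \<comment> \<open>the reversed loop traverses the same side of the edge of \<open>z\<close>, from its other end\<close>
    then have "lstep M vb i z = a1 (a0 z)" using z(2) by (auto simp: loopflag_def lstep_eq)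
    then have "a1 (a1 (a0 z)) \<in> lorbit M vb i (a1 y)"
      using lstep_in_lorbit[OF z(1)] lorbit_a1[OF y] by (metis image_eqI)
    then have "a0 z \<in> lorbit M vb i (a1 y)" using \<open>z \<in> flags\<close> by simp
    moreover have "loopflag M vb i (a0 z)" using z(2) False \<open>z \<in> flags\<close> by (auto simp: loopflag_def)
    ultimately show ?thesis by blast
  qed
  then show ?thesis using y by (auto simp: is_loop_at_def sublevel_def)
qed

lemma same_loop_refl: "same_loop M vb j g g"
  unfolding same_loop_def using self_in_lorbit by blast

definition covers :: "(nat \<times> 'f) list \<Rightarrow> nat \<Rightarrow> 'f \<Rightarrow> bool" where
  "covers acc i y \<longleftrightarrow> (\<exists>(j, h)\<in>set acc. j = i \<and> same_loop M vb i y h)"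

fun new_loop_after :: "nat \<times> 'f \<Rightarrow> nat \<times> 'f \<Rightarrow> bool" where
  "new_loop_after (j, g) (j', g') \<longleftrightarrow> (j = j' \<longrightarrow> \<not> same_loop M vb j' g' g)"

definition valid_loops :: "(nat \<times> 'f) list \<Rightarrow> bool" where
  "valid_loops acc \<longleftrightarrow> (\<forall>(j, g)\<in>set acc. j \<le> ml \<and> is_loop_at M vb j g) \<and>
     sorted_wrt new_loop_after acc"

text \<open>In the state \<open>(k, acc)\<close> the loops \<open>acc ! p\<close> with \<open>p < k\<close> have been travelled.\<close>
fun orient_inv :: "nat \<times> (nat \<times> 'f) list \<Rightarrow> bool" where
  "orient_inv (k, acc) \<longleftrightarrow> valid_loops acc \<and> k \<le> length acc \<and> set (first_loops M vb) \<subseteq> set acc \<and>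
     (\<forall>p<k. \<forall>y\<in>lorbit M vb (fst (acc ! p)) (snd (acc ! p)). \<forall>i\<le>ml.
        is_loop_at M vb i y \<longrightarrow> covers acc i y)"

lemma covers_append: "covers acc i y \<Longrightarrow> covers (acc @ zs) i y"
  unfolding covers_def by auto

lemma new_loops_sorted: "sorted_wrt new_loop_after (map (\<lambda>j. (j, g)) (filter P [0..<n]))"
proof -
  have "sorted_wrt (<) (filter P [0..<n])" by (rule sorted_wrt_filter) simp
  then have "sorted_wrt (\<lambda>i j. new_loop_after (i, g) (j, g)) (filter P [0..<n])"
    by (rule sorted_wrt_mono_rel[rotated]) auto
  then show ?thesis by (simp add: sorted_wrt_map)
qed

lemma valid_visit:
  assumes "valid_loops acc"
  shows "valid_loops (visit M vb g acc)"
proof -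
  let ?new = "map (\<lambda>j. (j, g)) (new_at M vb acc g)"
  have "\<forall>(j, g')\<in>set ?new. j \<le> ml \<and> is_loop_at M vb j g'" unfolding new_at_def by auto
  moreover have "sorted_wrt new_loop_after ?new" unfolding new_at_def by (rule new_loops_sorted)
  moreover have "\<forall>x\<in>set acc. \<forall>y\<in>set ?new. new_loop_after x y" unfolding new_at_def by auto
  ultimately show ?thesis using assms unfolding valid_loops_def visit_def sorted_wrt_append by auto
qed

lemma covers_visit:
  assumes "i \<le> ml" "is_loop_at M vb i g"
  shows "covers (visit M vb g acc) i g"
proof (cases "covers acc i g")
  case True
  then show ?thesis unfolding visit_def by (rule covers_append)
next
  case False
  then have "i \<in> set (new_at M vb acc g)"
    using assms unfolding new_at_def covers_def by (auto simp del: upt_Suc)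
  then show ?thesis unfolding covers_def visit_def using same_loop_refl by fastforce
qed

lemma fold_visit:
  assumes "valid_loops acc"
  shows "valid_loops (fold (visit M vb) ws acc) \<and> (\<exists>zs. fold (visit M vb) ws acc = acc @ zs) \<and>
    (\<forall>y\<in>set ws. \<forall>i\<le>ml. is_loop_at M vb i y \<longrightarrow> covers (fold (visit M vb) ws acc) i y)"
  using assms
proof (induction ws arbitrary: acc)
  case (Cons w ws)
  let ?acc = "visit M vb w acc"
  obtain zs where IH: "valid_loops (fold (visit M vb) ws ?acc)" "fold (visit M vb) ws ?acc = ?acc @ zs"
    "\<forall>y\<in>set ws. \<forall>i\<le>ml. is_loop_at M vb i y \<longrightarrow> covers (fold (visit M vb) ws ?acc) i y"
    using Cons.IH[OF valid_visit[OF Cons.prems]] by blast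
  moreover have "\<forall>i\<le>ml. is_loop_at M vb i w \<longrightarrow> covers (fold (visit M vb) ws ?acc) i w"
    using IH(2) covers_visit covers_append by metis
  moreover have "\<exists>zs. ?acc = acc @ zs" unfolding visit_def by blast
  ultimately show ?case by auto
qed simp

lemma orient_inv_ostep:
  assumes "orient_inv st"
  shows "orient_inv (ostep M vb st)"
proof -
  obtain k acc where st: "st = (k, acc)" by fastforce
  show ?thesis
  proof (cases "k < length acc")
    case False
    then show ?thesis using assms st by (simp add: ostep_def)
  next
    case True
    obtain j g where jg: "acc ! k = (j, g)" by fastforce
    have inv: "valid_loops acc" "set (first_loops M vb) \<subseteq> set acc"
      "\<forall>p<k. \<forall>y\<in>lorbit M vb (fst (acc ! p)) (snd (acc ! p)). \<forall>i\<le>ml.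
        is_loop_at M vb i y \<longrightarrow> covers acc i y"
      using assms st by auto
    have "(j, g) \<in> set acc" using jg True by (metis nth_mem)
    then have "g \<in> sublevel j" using inv(1) is_loop_at_sublevel unfolding valid_loops_def by auto
    then obtain zs where acc': "valid_loops (travel M vb (j, g) acc)"
      "travel M vb (j, g) acc = acc @ zs"
      "\<forall>y\<in>lorbit M vb j g. \<forall>i\<le>ml. is_loop_at M vb i y \<longrightarrow> covers (travel M vb (j, g) acc) i y"
      using fold_visit[OF inv(1), of "lwalk M vb j g"] set_lwalk unfolding travel_def by auto
    have "ostep M vb st = (Suc k, acc @ zs)" using True st jg acc'(2) by (simp add: ostep_def)
    moreover have "(acc @ zs) ! p = acc ! p" if "p < Suc k" for p
      using that True by (simp add: nth_append)
    ultimately show ?thesis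
      using acc' inv True jg covers_append by (auto simp: less_Suc_eq)
  qed
qed

lemma valid_first_loops: "valid_loops (first_loops M vb)"
  unfolding valid_loops_def first_loops_def by (auto simp del: upt_Suc intro: new_loops_sorted)

lemma length_valid_loops: "valid_loops acc \<Longrightarrow> length acc \<le> Suc ml * card flags"
proof -
  assume valid: "valid_loops acc"
  then have "distinct acc"
    using distinct_if_sorted_wrt_irrefl[of new_loop_after acc] same_loop_refl
    unfolding valid_loops_def by fastforce
  moreover have "set acc \<subseteq> {0..ml} \<times> flags"
    using valid unfolding valid_loops_def is_loop_at_def by auto
  then have "card (set acc) \<le> card ({0..ml} \<times> flags)"
    using finite_flags by (intro card_mono) auto
  then have "card (set acc) \<le> Suc ml * card flags" by (simp add: card_cartesian_product)
  ultimately show ?thesis using distinct_card by metis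
qed

lemma orient_inv_iterate:
  "(ostep M vb ^^ n) (0, first_loops M vb) = (k, acc) \<Longrightarrow> orient_inv (k, acc) \<and> (n \<le> k \<or> k = length acc)"
proof (induction n arbitrary: k acc)
  case 0
  then show ?case using valid_first_loops by simp
next
  case (Suc n)
  obtain k' acc' where st: "(ostep M vb ^^ n) (0, first_loops M vb) = (k', acc')" by fastforce
  then have inv: "orient_inv (k', acc')" "n \<le> k' \<or> k' = length acc'" using Suc.IH by auto
  have step: "ostep M vb (k', acc') = (k, acc)" using st Suc.prems by simp
  then have "Suc n \<le> k \<or> k = length acc"
    using inv by (cases "k' < length acc'") (auto simp: ostep_def)
  then show ?case using orient_inv_ostep[OF inv(1)] step by simp
qed

text \<open>The number of iterations exceeds the length of any valid list, so the procedure has stopped.\<close>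
lemma oriented_loops_travelled: "orient_inv (length (oriented_loops M vb), oriented_loops M vb)"
proof -
  let ?N = "Suc ml * card flags + 1"
  obtain k acc where st: "(ostep M vb ^^ ?N) (0, first_loops M vb) = (k, acc)" by fastforce
  then have "orient_inv (k, acc)" "?N \<le> k \<or> k = length acc" using orient_inv_iterate by blast+
  moreover have "acc = oriented_loops M vb" using st unfolding oriented_loops_def by simp
  ultimately show ?thesis using length_valid_loops[of acc] by auto
qed

abbreviation OL :: "(nat \<times> 'f) list" where "OL \<equiv> oriented_loops M vb"

lemma valid_oriented_loops: "valid_loops OL"
  and first_loops_oriented: "set (first_loops M vb) \<subseteq> set OL"
  using oriented_loops_travelled by auto

lemma covers_loop_meeting_oriented_loop:
  assumes "(j, g) \<in> set OL" "y \<in> lorbit M vb j g" "i \<le> ml" "is_loop_at M vb i y"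
  shows "covers OL i y"
  using oriented_loops_travelled assms by (auto simp: in_set_conv_nth)

end

section \<open>Every level loop gets oriented\<close>

context pointed_bipartite_map
begin

lemma covers_lorbit:
  assumes "y \<in> sublevel i" "z \<in> lorbit M vb i y"
  shows "covers acc i z \<longleftrightarrow> covers acc i y"
  using lorbit_eq[OF assms] unfolding covers_def same_loop_def by simp

lemma covers_a1:
  assumes valid: "valid_loops acc" and y: "y \<in> sublevel i"
  shows "covers acc i (a1 y) \<longleftrightarrow> covers acc i y"
proof -
  have O: "lorbit M vb i y \<subseteq> flags" using lorbit_subset_sublevel[OF y] by (auto simp: sublevel_def)
  have "same_loop M vb i (a1 y) h \<longleftrightarrow> same_loop M vb i y h" if "h \<in> flags" for h
  proof -
    have "h \<in> a1 ` lorbit M vb i y \<longleftrightarrow> a1 h \<in> lorbit M vb i y"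
      using that O by (auto simp: image_iff) (metis involutions(2) subsetD)
    moreover have "a1 h \<in> a1 ` lorbit M vb i y \<longleftrightarrow> h \<in> lorbit M vb i y"
      using that O by (auto simp: image_iff subset_iff)
    ultimately show ?thesis unfolding same_loop_def lorbit_a1[OF y] by blast
  qed
  moreover have "\<forall>(j, h)\<in>set acc. h \<in> flags"
    using valid unfolding valid_loops_def is_loop_at_def by auto
  ultimately show ?thesis unfolding covers_def by fastforce
qed

lemma covers_obtain:
  assumes valid: "valid_loops acc" and "covers acc i y" and y: "y \<in> sublevel i"
  obtains g where "(i, g) \<in> set acc" "y \<in> lorbit M vb i g \<or> a1 y \<in> lorbit M vb i g"
proof -
  obtain g where g: "(i, g) \<in> set acc" "same_loop M vb i y g"
    using assms(2) unfolding covers_def by blast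
  have "g \<in> sublevel i" using g(1) valid is_loop_at_sublevel unfolding valid_loops_def by auto
  have "y \<in> lorbit M vb i g \<or> a1 y \<in> lorbit M vb i g"
  proof (cases "g \<in> lorbit M vb i y")
    case True
    then have "lorbit M vb i g = lorbit M vb i y" by (rule lorbit_eq[OF y])
    then show ?thesis using self_in_lorbit[of y i] by simp
  next
    case False
    then have "a1 g \<in> lorbit M vb i y" using g(2) unfolding same_loop_def by blast
    then have "lorbit M vb i (a1 g) = lorbit M vb i y" by (rule lorbit_eq[OF y])
    then have "a1 ` lorbit M vb i g = lorbit M vb i y" by (simp add: lorbit_a1[OF \<open>g \<in> sublevel i\<close>])
    then have "y \<in> a1 ` lorbit M vb i g" using self_in_lorbit[of y i] by simp
    then obtain z where "z \<in> lorbit M vb i g" "y = a1 z" by (rule imageE)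
    moreover have "z \<in> flags"
      using \<open>z \<in> lorbit M vb i g\<close> lorbit_subset_sublevel[OF \<open>g \<in> sublevel i\<close>] by (auto simp: sublevel_def)
    ultimately show ?thesis by simp
  qed
  then show ?thesis using that g(1) by blast
qed

lemma covers_loop_meeting_unoriented_loop:
  assumes "(j, g) \<in> set OL" "y \<in> lorbit M vb j g \<or> a1 y \<in> lorbit M vb j g" "is_loop_at M vb i y"
  shows "covers OL i y"
proof -
  have i: "i \<le> ml" by (rule is_loop_at_le_maxlab[OF assms(3)])
  show ?thesis using assms(2)
  proof
    assume "a1 y \<in> lorbit M vb j g"
    then have "covers OL i (a1 y)" by (rule covers_loop_meeting_oriented_loop[OF assms(1) _ i is_loop_at_a1[OF assms(3)]])
    then show ?thesis using covers_a1[OF valid_oriented_loops is_loop_at_sublevel[OF assms(3)]] by simp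
  qed (rule covers_loop_meeting_oriented_loop[OF assms(1) _ i assms(3)])
qed

lemma label_rot_funpow [simp]: "h \<in> flags \<Longrightarrow> lb ((rot ^^ n) h) = lb h"
  by (induction n) auto

lemma lstep_funpow_rotation:
  assumes "h \<in> flags" "\<And>k. k < m \<Longrightarrow> lb (a0 ((rot ^^ k) h)) = Suc (lb h)"
  shows "(lstep M vb (lb h) ^^ m) h = (rot ^^ m) h"
  using assms(2)
proof (induction m)
  case (Suc m)
  then show ?case using assms(1) by (simp add: lstep_eq)
qed simp

lemma is_loop_at_label:
  assumes h: "h \<in> flags"
  shows "is_loop_at M vb (lb h) h"
proof (cases "lb h")
  case 0
  then have "loopflag M vb (lb h) h" by (simp add: loopflag_def)
  then show ?thesis using h self_in_lorbit unfolding is_loop_at_def by blast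
next
  case (Suc i)
  obtain w where w: "w \<in> vertex_of M h" "w \<in> flags" "lb (a0 w) = i"
    using label_descent[OF h Suc] by blast
  obtain n where "w = (rot ^^ n) h \<or> w = a2 ((rot ^^ n) h)"
    using vertex_of_subset_rotations[OF h w(1)] by blast
  then have "lb (a0 ((rot ^^ n) h)) = lb (a0 w)"
    using label_a0_a2[OF rot_funpow_flag[OF h, of n]] by auto
  then have "lb (a0 ((rot ^^ n) h)) \<noteq> Suc (lb h)" using w(3) Suc by simp
  then have ex: "\<exists>n. lb (a0 ((rot ^^ n) h)) \<noteq> Suc (lb h)" by blast
  define m where "m = (LEAST n. lb (a0 ((rot ^^ n) h)) \<noteq> Suc (lb h))"
  have m: "lb (a0 ((rot ^^ m) h)) \<noteq> Suc (lb h)"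
    unfolding m_def using ex by (rule LeastI_ex)
  have "lb (a0 ((rot ^^ k) h)) = Suc (lb h)" if "k < m" for k
    using not_less_Least[OF that[unfolded m_def]] by blast
  then have "(lstep M vb (lb h) ^^ m) h = (rot ^^ m) h" by (rule lstep_funpow_rotation[OF h])
  then have "(rot ^^ m) h \<in> lorbit M vb (lb h) h" unfolding lorbit_def by (rule level.orbitI)
  moreover have "lb (a0 ((rot ^^ m) h)) = i" using m label_a0[of "(rot ^^ m) h"] h Suc by auto
  then have "loopflag M vb (lb h) ((rot ^^ m) h)" using h Suc by (simp add: loopflag_def)
  ultimately show ?thesis using h unfolding is_loop_at_def by blast
qed

lemma is_loop_at_up:
  assumes "h \<in> flags" "lb (a0 h) = Suc (lb h)"
  shows "is_loop_at M vb (Suc (lb h)) h"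
  using assms self_in_lorbit unfolding is_loop_at_def loopflag_def by fastforce

lemma covers_up_iff:
  assumes h: "h \<in> flags" "lb (a0 h) = Suc (lb h)"
  shows "covers OL (Suc (lb h)) h \<longleftrightarrow> covers OL (lb h) h"
proof
  assume "covers OL (Suc (lb h)) h"
  moreover have "h \<in> sublevel (Suc (lb h))" using h by (simp add: sublevel_def)
  ultimately obtain g where "(Suc (lb h), g) \<in> set OL"
    "h \<in> lorbit M vb (Suc (lb h)) g \<or> a1 h \<in> lorbit M vb (Suc (lb h)) g"
    using covers_obtain valid_oriented_loops by blast
  then show "covers OL (lb h) h" using covers_loop_meeting_unoriented_loop is_loop_at_label[OF h(1)] by blast
next
  assume "covers OL (lb h) h"
  moreover have "h \<in> sublevel (lb h)" using h by (simp add: sublevel_def)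
  ultimately obtain g where "(lb h, g) \<in> set OL" "h \<in> lorbit M vb (lb h) g \<or> a1 h \<in> lorbit M vb (lb h) g"
    using covers_obtain valid_oriented_loops by blast
  then show "covers OL (Suc (lb h)) h" using covers_loop_meeting_unoriented_loop is_loop_at_up[OF h] by blast
qed

lemma covers_level0_iff:
  assumes y: "y \<in> flags" "lb y = 0" and y': "y' \<in> flags" "lb y' = 0"
  shows "covers OL 0 y' \<longleftrightarrow> covers OL 0 y"
proof -
  have "vertex_of M y' = vertex_of M y" using y y' label_eq_0_iff by simp
  then have "y' \<in> vertex_of M y" unfolding vertex_of_def by (simp add: mem_orb_iff)
  then obtain n where n: "y' = (rot ^^ n) y \<or> y' = a2 ((rot ^^ n) y)"
    using vertex_of_subset_rotations[OF y(1)] by blast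
  \<comment> \<open>all neighbours of the pointed vertex have label 1, so the level-0 loop turns around it\<close>
  have "lb (a0 ((rot ^^ k) y)) = Suc (lb y)" for k
    using label_a0[of "(rot ^^ k) y"] y by auto
  then have rot_in: "(rot ^^ k) y \<in> lorbit M vb 0 y" for k
    using lstep_funpow_rotation[OF y(1)] y(2) level.orbitI unfolding lorbit_def by metis
  have y0: "y \<in> sublevel 0" using y by (simp add: sublevel_def)
  show ?thesis using n
  proof
    assume "y' = (rot ^^ n) y"
    then show ?thesis using covers_lorbit[OF y0] rot_in by blast
  next
    assume "y' = a2 ((rot ^^ n) y)"
    then have "a1 y' = (rot ^^ Suc n) y" by simp
    then have "covers OL 0 (a1 y') \<longleftrightarrow> covers OL 0 y" using covers_lorbit[OF y0] rot_in by metis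
    then show ?thesis using covers_a1[OF valid_oriented_loops, of y' 0] y' by (simp add: sublevel_def)
  qed
qed

lemma covers_iff_covers_level0:
  "is_loop_at M vb i y \<Longrightarrow> \<exists>y0\<in>flags. lb y0 = 0 \<and> (covers OL i y \<longleftrightarrow> covers OL 0 y0)"
proof (induction i arbitrary: y)
  case 0
  then show ?case by (auto simp: is_loop_at_def)
next
  case (Suc i)
  have y: "y \<in> sublevel (Suc i)" using is_loop_at_sublevel Suc.prems by blast
  obtain z where z: "z \<in> lorbit M vb (Suc i) y" "loopflag M vb (Suc i) z"
    using Suc.prems unfolding is_loop_at_def by blast
  have zl: "z \<in> sublevel (Suc i)" using z(1) lorbit_subset_sublevel[OF y] by blast
  then have "z \<in> flags" by (simp add: sublevel_def)
  have "covers OL (Suc i) y \<longleftrightarrow> covers OL (Suc i) z" using covers_lorbit[OF y z(1)] by simp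
  \<comment> \<open>move to a flag crossing an \<open>i\<close>--\<open>(i+1)\<close> edge upwards, on the same unoriented loop\<close>
  moreover obtain h where h: "h \<in> flags" "lb h = i" "lb (a0 h) = Suc i"
    "covers OL (Suc i) z \<longleftrightarrow> covers OL (Suc i) h"
  proof (cases "lb z = i")
    case True
    then show ?thesis using that z(2) \<open>z \<in> flags\<close> by (simp add: loopflag_def)
  next
    case False
    then have d: "lb z = Suc i" "lb (a0 z) = i" using z(2) by (auto simp: loopflag_def)
    then have "lstep M vb (Suc i) z = a1 (a0 z)" by (simp add: lstep_eq)
    then have "a0 z \<in> lorbit M vb (Suc i) (a1 z)" by (rule a0_in_reversed_lorbit[OF zl])
    then have "covers OL (Suc i) (a0 z) \<longleftrightarrow> covers OL (Suc i) z"
      using covers_lorbit[of "a1 z" "Suc i"] covers_a1[OF valid_oriented_loops zl] zl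
      by (simp add: sublevel_def)
    then show ?thesis using that[of "a0 z"] d \<open>z \<in> flags\<close> by simp
  qed
  moreover have "covers OL (Suc i) h \<longleftrightarrow> covers OL i h" using covers_up_iff[OF h(1)] h(2,3) by simp
  moreover obtain y0 where "y0 \<in> flags" "lb y0 = 0" "covers OL i h \<longleftrightarrow> covers OL 0 y0"
    using Suc.IH is_loop_at_label[OF h(1)] h(2) by blast
  ultimately show ?case by blast
qed

lemma root_flag_up: "root' M vb \<in> flags \<and> lb (a0 (root' M vb)) = Suc (lb (root' M vb))"
  using label_a0[OF root_flag] root_flag
  by (auto simp: root'_def eps_def a0_a2_commute[symmetric])

lemma every_loop_covered: "is_loop_at M vb i y \<Longrightarrow> covers OL i y"
proof -
  assume loop: "is_loop_at M vb i y"
  let ?r = "root' M vb"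
  have "is_loop_at M vb (Suc (lb ?r)) ?r" using is_loop_at_up root_flag_up by blast
  moreover have "Suc (lb ?r) \<le> ml" using is_loop_at_le_maxlab calculation by blast
  ultimately have "(Suc (lb ?r), ?r) \<in> set OL"
    using first_loops_oriented unfolding first_loops_def by (auto simp del: upt_Suc)
  then have "covers OL (Suc (lb ?r)) ?r" unfolding covers_def using same_loop_refl by blast
  then obtain r0 where r0: "r0 \<in> flags" "lb r0 = 0" "covers OL 0 r0"
    using covers_iff_covers_level0 \<open>is_loop_at M vb (Suc (lb ?r)) ?r\<close> by blast
  obtain y0 where "y0 \<in> flags" "lb y0 = 0" "covers OL i y \<longleftrightarrow> covers OL 0 y0"
    using covers_iff_covers_level0[OF loop] by blast
  then show ?thesis using covers_level0_iff r0 by blast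
qed

end

section \<open>Each edge side of type \<open>i\<close>--\<open>(i+1)\<close> is travelled upwards exactly once\<close>

context pointed_bipartite_map
begin

definition oriented_flags :: "nat \<Rightarrow> 'f set" where
  "oriented_flags j = (\<Union>g\<in>{g. (j, g) \<in> set OL}. lorbit M vb j g)"

lemma oriented_loop_sublevel: "(j, g) \<in> set OL \<Longrightarrow> g \<in> sublevel j"
  using valid_oriented_loops is_loop_at_sublevel unfolding valid_loops_def by auto

lemma oriented_flags_sublevel: "oriented_flags j \<subseteq> sublevel j"
  unfolding oriented_flags_def using oriented_loop_sublevel lorbit_subset_sublevel by blast

lemma lstep_oriented_flags: "x \<in> oriented_flags j \<Longrightarrow> lstep M vb j x \<in> oriented_flags j"
  unfolding oriented_flags_def using lstep_in_lorbit by blast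

lemma oriented_flags_preimage:
  assumes "y \<in> oriented_flags j"
  shows "\<exists>x\<in>oriented_flags j. lstep M vb j x = y"
proof -
  obtain g where g: "(j, g) \<in> set OL" "y \<in> lorbit M vb j g"
    using assms unfolding oriented_flags_def by blast
  then show ?thesis
    using lstep_preimage_in_lorbit[OF oriented_loop_sublevel[OF g(1)] g(2)]
    unfolding oriented_flags_def by blast
qed

lemma lstep_up: "lb h \<noteq> Suc i \<Longrightarrow> lstep M vb (Suc i) h = a1 (a0 h)"
  by (simp add: lstep_eq)

lemma no_reversed_oriented_loops:
  assumes g: "(j, g1) \<in> set OL" "(j, g2) \<in> set OL"
  shows "lorbit M vb j g2 \<noteq> a1 ` lorbit M vb j g1"
proof
  assume O: "lorbit M vb j g2 = a1 ` lorbit M vb j g1"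
  have g1: "g1 \<in> sublevel j" using g(1) oriented_loop_sublevel by blast
  have O1: "lorbit M vb j g1 \<subseteq> flags" using lorbit_subset_sublevel[OF g1] by (auto simp: sublevel_def)
  have "g2 \<in> a1 ` lorbit M vb j g1" using self_in_lorbit[of g2 j] unfolding O .
  then have "a1 g2 \<in> lorbit M vb j g1" using O1 by auto
  show False
  proof (cases "g1 = g2")
    case True
    then show False using a1_notin_lorbit[OF g1] \<open>a1 g2 \<in> lorbit M vb j g1\<close> by simp
  next
    case False
    have "same_loop M vb j g2 g1" using O self_in_lorbit[of g1] unfolding same_loop_def by blast
    moreover have "same_loop M vb j g1 g2"
      using \<open>a1 g2 \<in> lorbit M vb j g1\<close> unfolding same_loop_def by blast
    moreover have "new_loop_after (j, g1) (j, g2) \<or> new_loop_after (j, g2) (j, g1)"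
      using sorted_wrt_related[of new_loop_after OL] valid_oriented_loops g False
      unfolding valid_loops_def by blast
    ultimately show False by auto
  qed
qed

lemma up_flag_oriented_iff:
  assumes h: "h \<in> flags" "lb (a0 h) = Suc (lb h)"
  shows "a0 h \<in> oriented_flags (Suc (lb h)) \<longleftrightarrow> h \<notin> oriented_flags (Suc (lb h))"
proof -
  let ?j = "Suc (lb h)"
  have hl: "h \<in> sublevel ?j" using h by (simp add: sublevel_def)
  have rev: "a0 h \<in> lorbit M vb ?j (a1 h)" using a0_in_reversed_lorbit[OF hl] lstep_up by simp
  have "h \<in> oriented_flags ?j \<or> a0 h \<in> oriented_flags ?j"
  proof -
    have "covers OL ?j h" using every_loop_covered is_loop_at_up[OF h] by blast
    then obtain g where g: "(?j, g) \<in> set OL" "h \<in> lorbit M vb ?j g \<or> a1 h \<in> lorbit M vb ?j g"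
      using covers_obtain[OF valid_oriented_loops _ hl] by blast
    have "lorbit M vb ?j (a1 h) = lorbit M vb ?j g" if "a1 h \<in> lorbit M vb ?j g"
      using lorbit_eq[OF oriented_loop_sublevel[OF g(1)] that] .
    then show ?thesis using g rev unfolding oriented_flags_def by blast
  qed
  moreover have "\<not> (h \<in> oriented_flags ?j \<and> a0 h \<in> oriented_flags ?j)"
  proof
    assume "h \<in> oriented_flags ?j \<and> a0 h \<in> oriented_flags ?j"
    then obtain g1 g2 where g: "(?j, g1) \<in> set OL" "h \<in> lorbit M vb ?j g1"
      "(?j, g2) \<in> set OL" "a0 h \<in> lorbit M vb ?j g2"
      unfolding oriented_flags_def by blast
    have g1: "g1 \<in> sublevel ?j" and g2: "g2 \<in> sublevel ?j" using g oriented_loop_sublevel by blast+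
    have "lorbit M vb ?j g2 = lorbit M vb ?j (a0 h)" using lorbit_eq[OF g2 g(4)] ..
    also have "\<dots> = lorbit M vb ?j (a1 h)" using lorbit_eq[OF _ rev] hl by (simp add: sublevel_def)
    also have "\<dots> = a1 ` lorbit M vb ?j g1" using lorbit_a1[OF hl] lorbit_eq[OF g1 g(2)] by simp
    finally show False using no_reversed_oriented_loops[OF g(1,3)] by blast
  qed
  ultimately show ?thesis by blast
qed

end

section \<open>Counting selected corners\<close>

context pointed_bipartite_map
begin

lemma lstep_crosses_up_iff:
  assumes "x \<in> sublevel (Suc i)"
  shows "\<not> Suc i \<le> lb x \<and> Suc i \<le> lb (lstep M vb (Suc i) x) \<longleftrightarrow> lb x = i \<and> lb (a0 x) = Suc i"
proof -
  have x: "x \<in> flags" "lb x \<le> Suc i" using assms by (simp_all add: sublevel_def)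
  show ?thesis
  proof (cases "lb x = Suc i")
    case False
    then have "lb (lstep M vb (Suc i) x) = lb (a0 x)" using x(1) by (simp add: lstep_up)
    then show ?thesis using label_a0[OF x(1)] x(2) False by arith
  qed simp
qed

lemma lstep_crosses_down_iff:
  assumes "x \<in> sublevel (Suc i)"
  shows "Suc i \<le> lb x \<and> \<not> Suc i \<le> lb (lstep M vb (Suc i) x) \<longleftrightarrow> lb x = Suc i \<and> lb (a0 x) = i"
proof -
  have x: "x \<in> flags" "lb x \<le> Suc i" using assms by (simp_all add: sublevel_def)
  show ?thesis
  proof (cases "lb x = Suc i \<and> lb (a0 x) = Suc (Suc i)")
    case True
    then show ?thesis using x(1) by (simp add: lstep_eq)
  next
    case False
    then have "lb (lstep M vb (Suc i) x) = lb (a0 x)" using x(1) unfolding lstep_eq by simp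
    then show ?thesis using label_a0[OF x(1)] x(2) by arith
  qed
qed

text \<open>A level loop only changes faces by turning around a vertex, whose label is the level.\<close>
lemma lstep_changes_face:
  assumes "x \<in> flags" "F \<in> faces M" "x \<in> F \<longleftrightarrow> lstep M vb j x \<notin> F"
  shows "lb (lstep M vb j x) = j"
proof (cases "lb x = j \<and> lb (a0 x) = Suc j")
  case True
  then show ?thesis using assms(1) by (simp add: lstep_eq)
next
  case False
  then have "lstep M vb j x = a1 (a0 x)" by (auto simp: lstep_eq)
  then show ?thesis using assms face_closed[OF assms(2)] by simp
qed

text \<open>Within a face, the oriented level-\<open>(i+1)\<close> loops go up as often as they go down, since
  they can only enter or leave the face at label \<open>i+1\<close>.\<close>
lemma card_oriented_up_eq_down:
  assumes F: "F \<in> faces M"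
  shows "card {x\<in>F. lb x = i \<and> lb (a0 x) = Suc i \<and> x \<in> oriented_flags (Suc i)} =
         card {x\<in>F. lb x = Suc i \<and> lb (a0 x) = i \<and> x \<in> oriented_flags (Suc i)}"
proof -
  let ?O = "oriented_flags (Suc i)" and ?s = "lstep M vb (Suc i)"
  let ?T = "F \<inter> ?O" and ?P = "\<lambda>x. Suc i \<le> lb x"
  have T: "?T \<subseteq> sublevel (Suc i)" using oriented_flags_sublevel by blast
  have flag: "x \<in> flags" if "x \<in> ?O" for x using that oriented_flags_sublevel by (auto simp: sublevel_def)
  have "card {x\<in>?T. \<not> ?P x \<and> ?P (?s x)} = card {x\<in>?T. ?P x \<and> \<not> ?P (?s x)}"
  proof (rule card_entries_eq_card_exits)
    show "finite ?T" using finite_subset[OF T] level.finite_domain by blast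
    show "inj_on ?s ?T" using inj_on_subset[OF level.inj T] .
    show "?P (?s x)" if "x \<in> ?T" "?s x \<notin> ?T" for x
      using that lstep_oriented_flags lstep_changes_face[OF flag F] by fastforce
    show "?P y" if y: "y \<in> ?T" "y \<notin> ?s ` ?T" for y
    proof -
      obtain x where x: "x \<in> ?O" "?s x = y" using oriented_flags_preimage[of y "Suc i"] y(1) by blast
      then have "x \<notin> F" using y by blast
      then have "x \<in> F \<longleftrightarrow> ?s x \<notin> F" using x(2) y(1) by simp
      then have "lb (?s x) = Suc i" by (rule lstep_changes_face[OF flag[OF x(1)] F])
      then show ?thesis using x(2) by simp
    qed
  qed
  moreover have "{x\<in>?T. \<not> ?P x \<and> ?P (?s x)} = {x\<in>F. lb x = i \<and> lb (a0 x) = Suc i \<and> x \<in> ?O}"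
    using lstep_crosses_up_iff[of _ i] T by blast
  moreover have "{x\<in>?T. ?P x \<and> \<not> ?P (?s x)} = {x\<in>F. lb x = Suc i \<and> lb (a0 x) = i \<and> x \<in> ?O}"
    using lstep_crosses_down_iff[of _ i] T by blast
  ultimately show ?thesis by simp
qed

lemma oriented_down_flags_eq:
  assumes F: "F \<in> faces M"
  shows "{x\<in>F. lb x = Suc i \<and> lb (a0 x) = i \<and> x \<in> oriented_flags (Suc i)} =
         a0 ` ({x\<in>F. lb x = i \<and> lb (a0 x) = Suc i} - oriented_flags (Suc i))"
    (is "?D = a0 ` (?S - ?O)")
proof
  have FA: "F \<subseteq> flags" using face_subset_flags[OF F] .
  show "?D \<subseteq> a0 ` (?S - ?O)"
  proof
    fix x assume x: "x \<in> ?D"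
    then have "x \<in> flags" using FA by blast
    then have "a0 x \<in> ?S - ?O" using up_flag_oriented_iff[of "a0 x"] x face_closed[OF F] by simp
    then show "x \<in> a0 ` (?S - ?O)" using \<open>x \<in> flags\<close> image_eqI[of x a0 "a0 x"] by simp
  qed
  show "a0 ` (?S - ?O) \<subseteq> ?D"
  proof
    fix x assume "x \<in> a0 ` (?S - ?O)"
    then obtain h where h: "h \<in> ?S" "h \<notin> ?O" "x = a0 h" by blast
    then have "h \<in> flags" using FA by blast
    then show "x \<in> ?D" using h up_flag_oriented_iff[of h] face_closed[OF F] by simp
  qed
qed

lemma card_up_flags_level:
  assumes F: "F \<in> faces M"
  shows "card {x\<in>F. lb x = i \<and> lb (a0 x) = Suc i} =
         2 * card {x\<in>F. lb x = i \<and> lb (a0 x) = Suc i \<and> x \<in> oriented_flags (Suc i)}"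
proof -
  let ?O = "oriented_flags (Suc i)" and ?S = "{x\<in>F. lb x = i \<and> lb (a0 x) = Suc i}"
  have FA: "F \<subseteq> flags" using face_subset_flags[OF F] .
  have "inj_on a0 (?S - ?O)"
  proof (rule inj_onI)
    fix u v assume "u \<in> ?S - ?O" "v \<in> ?S - ?O" "a0 u = a0 v"
    then show "u = v" using FA inj_on_flags(1)[of u v] by blast
  qed
  then have "card {x\<in>F. lb x = Suc i \<and> lb (a0 x) = i \<and> x \<in> ?O} = card (?S - ?O)"
    unfolding oriented_down_flags_eq[OF F] by (rule card_image)
  moreover have "card ?S = card (?S \<inter> ?O) + card (?S - ?O)"
    using finite_subset[OF FA finite_flags] by (simp add: card_Int_Diff)
  moreover have "?S \<inter> ?O = {x\<in>F. lb x = i \<and> lb (a0 x) = Suc i \<and> x \<in> ?O}" by blast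
  ultimately show ?thesis using card_oriented_up_eq_down[OF F, of i] by simp
qed

text \<open>For \<open>h\<close> in \<open>selecting_flags\<close>, the corner of \<open>a0 h\<close> is selected by the oriented loop through \<open>h\<close>.\<close>
definition selecting_flags :: "'f set" where
  "selecting_flags = {h\<in>flags. lb (a0 h) = Suc (lb h) \<and> h \<in> oriented_flags (Suc (lb h))}"

lemma card_up_flags_face:
  assumes F: "F \<in> faces M"
  shows "card {h\<in>F. lb (a0 h) = Suc (lb h)} = 2 * card (selecting_flags \<inter> F)"
proof -
  have FA: "F \<subseteq> flags" using face_subset_flags[OF F] .
  then have fin: "finite F" using finite_subset finite_flags by blast
  have "{h\<in>F. lb (a0 h) = Suc (lb h)} = (\<Union>i\<le>ml. {x\<in>F. lb x = i \<and> lb (a0 x) = Suc i})"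
    using FA label_le_maxlab by fastforce
  moreover have "selecting_flags \<inter> F =
      (\<Union>i\<le>ml. {x\<in>F. lb x = i \<and> lb (a0 x) = Suc i \<and> x \<in> oriented_flags (Suc i)})"
    using FA label_le_maxlab unfolding selecting_flags_def by fastforce
  ultimately show ?thesis
    using fin card_up_flags_level[OF F]
    by (simp add: card_UN_disjoint sum_distrib_left disjoint_iff)
qed

lemma card_face_eq_twice_up_flags:
  assumes F: "F \<in> faces M"
  shows "card F = 2 * card {h\<in>F. lb (a0 h) = Suc (lb h)}"
proof (rule card_eq_twice_card_half)
  have FA: "F \<subseteq> flags" using face_subset_flags[OF F] .
  then show "finite F" using finite_subset finite_flags by blast
  show "a0 x \<in> F" "a0 (a0 x) = x" if "x \<in> F" for x using that FA face_closed[OF F] by auto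
  show "lb (a0 (a0 x)) = Suc (lb (a0 x)) \<longleftrightarrow> \<not> lb (a0 x) = Suc (lb x)" if "x \<in> F" for x
    using that FA label_a0[of x] by auto
qed

lemma face_degree_eq:
  assumes "F \<in> faces M"
  shows "face_degree M F = 2 * card (selecting_flags \<inter> F)"
  using card_face_eq_twice_degree card_face_eq_twice_up_flags card_up_flags_face assms by simp

lemma selected_eq_image: "selected M vb = (\<lambda>h. corner_of M (a0 h)) ` selecting_flags"
proof
  show "selected M vb \<subseteq> (\<lambda>h. corner_of M (a0 h)) ` selecting_flags"
  proof
    fix c assume "c \<in> selected M vb"
    then obtain j g h where jgh: "(j, g) \<in> set OL" "c = corner_of M (a0 h)" "1 \<le> j"
      "h \<in> lorbit M vb j g" "lb h = j - 1" "lb (a0 h) = j"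
      unfolding selected_def by blast
    then have "h \<in> flags"
      using lorbit_subset_sublevel[OF oriented_loop_sublevel] by (auto simp: sublevel_def)
    moreover have "h \<in> oriented_flags j" using jgh unfolding oriented_flags_def by blast
    ultimately have "h \<in> selecting_flags" using jgh unfolding selecting_flags_def by auto
    then show "c \<in> (\<lambda>h. corner_of M (a0 h)) ` selecting_flags" using jgh(2) by blast
  qed
  show "(\<lambda>h. corner_of M (a0 h)) ` selecting_flags \<subseteq> selected M vb"
  proof
    fix c assume "c \<in> (\<lambda>h. corner_of M (a0 h)) ` selecting_flags"
    then obtain h where h: "h \<in> selecting_flags" "c = corner_of M (a0 h)" by blast
    then obtain g where "(Suc (lb h), g) \<in> set OL" "h \<in> lorbit M vb (Suc (lb h)) g"
      unfolding selecting_flags_def oriented_flags_def by blast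
    then show "c \<in> selected M vb" using h unfolding selected_def selecting_flags_def by fastforce
  qed
qed

lemma inj_on_selected_corner: "inj_on (\<lambda>h. corner_of M (a0 h)) selecting_flags"
proof (rule inj_onI)
  fix h1 h2 assume h: "h1 \<in> selecting_flags" "h2 \<in> selecting_flags"
    and eq: "corner_of M (a0 h1) = corner_of M (a0 h2)"
  have h1: "h1 \<in> flags" "lb (a0 h1) = Suc (lb h1)" "h1 \<in> oriented_flags (Suc (lb h1))"
    and h2: "h2 \<in> flags" "lb (a0 h2) = Suc (lb h2)" "h2 \<in> oriented_flags (Suc (lb h2))"
    using h unfolding selecting_flags_def by auto
  have "a0 h1 = a0 h2 \<or> a0 h1 = a1 (a0 h2)" using eq unfolding corner_of_def by auto
  then show "h1 = h2"
  proof
    assume "a0 h1 = a1 (a0 h2)"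
    then have "lb h1 = lb h2" using h1(2) h2 by simp
    have "lstep M vb (Suc (lb h2)) h2 = a1 (a0 h2)" by (simp add: lstep_up)
    then have "a0 h1 \<in> oriented_flags (Suc (lb h1))"
      using lstep_oriented_flags[OF h2(3)] \<open>a0 h1 = a1 (a0 h2)\<close> \<open>lb h1 = lb h2\<close> by simp
    then show ?thesis using up_flag_oriented_iff[OF h1(1,2)] h1(3) by blast
  qed (use h1 h2 in simp)
qed

lemma green_edges_of_face:
  assumes "F \<in> faces M"
  shows "{e\<in>selected M vb. face_of M (SOME x. x \<in> e) = F} =
         (\<lambda>h. corner_of M (a0 h)) ` (selecting_flags \<inter> F)"
proof -
  obtain x0 where F: "F = face_of M x0" using assms unfolding faces_def by blast
  have "face_of M (SOME x. x \<in> corner_of M (a0 h)) = face_of M h" if "h \<in> flags" for h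
  proof -
    have "(SOME x. x \<in> corner_of M (a0 h)) \<in> corner_of M (a0 h)"
      by (rule someI[of _ "a0 h"]) (simp add: corner_of_def)
    then show ?thesis using that by (auto simp: corner_of_def)
  qed
  moreover have "h \<in> F \<longleftrightarrow> face_of M h = F" for h
    unfolding F face_of_def by (rule mem_orb_iff)
  ultimately show ?thesis
    unfolding selected_eq_image selecting_flags_def by auto
qed

lemma card_edges_eq_card_selected: "card (edges M) = card (selected M vb)"
proof -
  have fin: "finite (faces M)" unfolding faces_def using finite_flags by simp
  have fin_F: "\<forall>F\<in>faces M. finite F" using face_subset_flags finite_subset finite_flags by blast
  have disj: "\<forall>F1\<in>faces M. \<forall>F2\<in>faces M. F1 \<noteq> F2 \<longrightarrow> F1 \<inter> F2 = {}"
    using orbs_disjoint unfolding faces_def face_of_def by blast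
  have "4 * card (edges M) = card (\<Union>F\<in>faces M. F)"
    using card_flags_eq_4_card_edges Union_orbs unfolding faces_def face_of_def by simp
  also have "\<dots> = (\<Sum>F\<in>faces M. card F)"
    using card_UN_disjoint[OF fin, of "\<lambda>F. F"] fin_F disj by simp
  also have "\<dots> = (\<Sum>F\<in>faces M. 4 * card (selecting_flags \<inter> F))"
    using card_face_eq_twice_up_flags card_up_flags_face by (intro sum.cong) auto
  also have "\<dots> = 4 * card (\<Union>F\<in>faces M. selecting_flags \<inter> F)"
  proof -
    have "card (\<Union>F\<in>faces M. selecting_flags \<inter> F) = (\<Sum>F\<in>faces M. card (selecting_flags \<inter> F))"
      by (rule card_UN_disjoint[OF fin]) (use fin_F disj in auto)
    then show ?thesis by (simp add: sum_distrib_left)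
  qed
  also have "(\<Union>F\<in>faces M. selecting_flags \<inter> F) = selecting_flags"
    using Union_orbs unfolding faces_def face_of_def selecting_flags_def by blast
  finally show ?thesis using card_image[OF inj_on_selected_corner] selected_eq_image by simp
qed

end

theorem proposition1:
  fixes M :: "'f cmap" and vb :: "'f set"
    and U :: "'f ugraph" and l :: "'f set \<Rightarrow> nat" and \<epsilon> :: bool
  assumes "is_map M" and "bipartite M" and "vb \<in> vertices M"
    and "Phi M vb = ((U, l), \<epsilon>)"
  shows "(vertices M = Vw U \<union> {vb} \<and> vb \<notin> Vw U \<and>
          (\<forall>v\<in>Vw U. l v = mdist M v vb)) \<and>
         (Vg U = faces M \<and>
         (\<forall>F\<in>faces M. face_degree M F = 2 * green_degree U F)) \<and>
         card (edges M) = card (Eu U)"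
proof -
  interpret pointed_bipartite_map M vb using assms(1-3) by unfold_locales
  have U: "Vw U = vertices M - {vb}" "Vg U = faces M" "Eu U = selected M vb"
      "ends U = (\<lambda>c. (vertex_of M (SOME x. x \<in> c), face_of M (SOME x. x \<in> c)))"
    and l: "l = mdist M vb"
    using assms(4) unfolding Phi_def by auto
  have "green_degree U F = card (selecting_flags \<inter> F)" if "F \<in> faces M" for F
    unfolding green_degree_def U using green_edges_of_face[OF that]
      card_image[OF inj_on_subset[OF inj_on_selected_corner]] by simp
  then show ?thesis
    using U l assms(3) mdist_sym face_degree_eq card_edges_eq_card_selected by auto
qed

end
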